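(* Let $(M^n,g,f,E)$ be an electrostatic system. Then, on the set where $f>0$, $$\mathrm{div}\Big[\frac1f\Big(\nabla|\nabla f|^2-4f\langle\nabla f,E\rangle E^\flat+\frac{2Rf}{n(n-1)}\nabla f\Big)\Big]=2f|\mathring{Ric}|^2+4f\,\mathring{Ric}(E,E)+\frac{n-2}{n}\langle\nabla R,\nabla f\rangle,$$ where $R$ is the scalar curvature and $\mathring{Ric}=Ric-\frac Rng$.
   Context: An electrostatic system $(M^n,g,f,E)$, $n\ge3$, consists of a Riemannian manifold $(M^n,g)$, a smooth function $f$, a smooth vector field $E$ with metric-dual 1-form $E^\flat$ (identified with $E$ via $g$ when taking divergence), and a constant $\Lambda\in\mathbb R$ such that $$\nabla^2 f=f\Big(Ric-\tfrac{2}{n-1}\Lambda g+2E^\flat\otimes E^\flat-\tfrac{2}{n-1}|E|^2g\Big),\quad \Delta f=\tfrac{2}{n-1}\big((n-2)|E|^2-\Lambda\big)f,\quad \mathrm{div}\,E=0,\quad d(fE^\flat)=0.$$ $f$ is positive in the interior of $M$ and, if $M$ has boundary, $f^{-1}(0)=\partial M$. *)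

theory Defs
  imports "HOL-Analysis.Analysis"
begin

text \<open>Local-coordinate Riemannian geometry on an open set U of real^'n
  (a coordinate chart), with metric components g x $ i $ j.
  Vector fields are given by components X x $ i, one-forms by w x $ i.\<close>

definition pd :: "'n::finite \<Rightarrow> (real^'n \<Rightarrow> real) \<Rightarrow> real^'n \<Rightarrow> real" where
  "pd i h x = frechet_derivative h (at x) (axis i 1)"

definition smooth_on :: "(real^'n::finite) set \<Rightarrow> (real^'n \<Rightarrow> real) \<Rightarrow> bool" where
  "smooth_on U h \<longleftrightarrow> (\<forall>is :: 'n list. \<forall>x\<in>U. (foldr pd is h) differentiable (at x))"

definition riemannian_metric_on :: "(real^'n::finite) set \<Rightarrow> (real^'n \<Rightarrow> real^'n^'n) \<Rightarrow> bool" where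
  "riemannian_metric_on U g \<longleftrightarrow>
     (\<forall>i j. smooth_on U (\<lambda>x. g x $ i $ j)) \<and>
     (\<forall>x\<in>U. \<forall>i j. g x $ i $ j = g x $ j $ i) \<and>
     (\<forall>x\<in>U. \<forall>v. v \<noteq> 0 \<longrightarrow> v \<bullet> (g x *v v) > 0)"

definition ginv :: "(real^'n::finite \<Rightarrow> real^'n^'n) \<Rightarrow> real^'n \<Rightarrow> real^'n^'n" where
  "ginv g x = matrix_inv (g x)"

definition christ :: "(real^'n::finite \<Rightarrow> real^'n^'n) \<Rightarrow> 'n \<Rightarrow> 'n \<Rightarrow> 'n \<Rightarrow> real^'n \<Rightarrow> real" where
  "christ g k i j x = (1/2) * (\<Sum>l\<in>UNIV. ginv g x $ k $ l *
      (pd i (\<lambda>y. g y $ j $ l) x + pd j (\<lambda>y. g y $ i $ l) x - pd l (\<lambda>y. g y $ i $ j) x))"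

definition ricci :: "(real^'n::finite \<Rightarrow> real^'n^'n) \<Rightarrow> 'n \<Rightarrow> 'n \<Rightarrow> real^'n \<Rightarrow> real" where
  "ricci g i j x = (\<Sum>k\<in>UNIV. pd k (christ g k i j) x - pd j (christ g k i k) x
      + (\<Sum>l\<in>UNIV. christ g k k l x * christ g l i j x - christ g k j l x * christ g l i k x))"

definition scal :: "(real^'n::finite \<Rightarrow> real^'n^'n) \<Rightarrow> real^'n \<Rightarrow> real" where
  "scal g x = (\<Sum>i\<in>UNIV. \<Sum>j\<in>UNIV. ginv g x $ i $ j * ricci g i j x)"

definition tricci :: "(real^'n::finite \<Rightarrow> real^'n^'n) \<Rightarrow> 'n \<Rightarrow> 'n \<Rightarrow> real^'n \<Rightarrow> real" where
  "tricci g i j x = ricci g i j x - scal g x / real CARD('n) * g x $ i $ j"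

definition tnorm2 :: "(real^'n::finite \<Rightarrow> real^'n^'n) \<Rightarrow> ('n \<Rightarrow> 'n \<Rightarrow> real^'n \<Rightarrow> real) \<Rightarrow> real^'n \<Rightarrow> real" where
  "tnorm2 g T x = (\<Sum>i\<in>UNIV. \<Sum>j\<in>UNIV. \<Sum>a\<in>UNIV. \<Sum>b\<in>UNIV.
      ginv g x $ i $ a * ginv g x $ j $ b * T i j x * T a b x)"

definition hess :: "(real^'n::finite \<Rightarrow> real^'n^'n) \<Rightarrow> (real^'n \<Rightarrow> real) \<Rightarrow> 'n \<Rightarrow> 'n \<Rightarrow> real^'n \<Rightarrow> real" where
  "hess g f i j x = pd i (pd j f) x - (\<Sum>k\<in>UNIV. christ g k i j x * pd k f x)"

definition lap :: "(real^'n::finite \<Rightarrow> real^'n^'n) \<Rightarrow> (real^'n \<Rightarrow> real) \<Rightarrow> real^'n \<Rightarrow> real" where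
  "lap g f x = (\<Sum>i\<in>UNIV. \<Sum>j\<in>UNIV. ginv g x $ i $ j * hess g f i j x)"

definition dif :: "(real^'n::finite \<Rightarrow> real) \<Rightarrow> real^'n \<Rightarrow> real^'n" where
  "dif h x = (\<chi> i. pd i h x)"

definition flat :: "(real^'n::finite \<Rightarrow> real^'n^'n) \<Rightarrow> (real^'n \<Rightarrow> real^'n) \<Rightarrow> real^'n \<Rightarrow> real^'n" where
  "flat g X x = (\<chi> i. \<Sum>j\<in>UNIV. g x $ i $ j * X x $ j)"

definition sharp :: "(real^'n::finite \<Rightarrow> real^'n^'n) \<Rightarrow> (real^'n \<Rightarrow> real^'n) \<Rightarrow> real^'n \<Rightarrow> real^'n" where
  "sharp g w x = (\<chi> i. \<Sum>j\<in>UNIV. ginv g x $ i $ j * w x $ j)"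

definition grad :: "(real^'n::finite \<Rightarrow> real^'n^'n) \<Rightarrow> (real^'n \<Rightarrow> real) \<Rightarrow> real^'n \<Rightarrow> real^'n" where
  "grad g h = sharp g (dif h)"

definition ginner :: "(real^'n::finite \<Rightarrow> real^'n^'n) \<Rightarrow> real^'n \<Rightarrow> real^'n \<Rightarrow> real^'n \<Rightarrow> real" where
  "ginner g x v w = (\<Sum>i\<in>UNIV. \<Sum>j\<in>UNIV. g x $ i $ j * v $ i * w $ j)"

definition divv :: "(real^'n::finite \<Rightarrow> real^'n^'n) \<Rightarrow> (real^'n \<Rightarrow> real^'n) \<Rightarrow> real^'n \<Rightarrow> real" where
  "divv g X x = (\<Sum>i\<in>UNIV. pd i (\<lambda>y. X y $ i) x)
      + (\<Sum>i\<in>UNIV. \<Sum>k\<in>UNIV. christ g i i k x * X x $ k)"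

definition closed_form_on :: "(real^'n::finite) set \<Rightarrow> (real^'n \<Rightarrow> real^'n) \<Rightarrow> bool" where
  "closed_form_on U w \<longleftrightarrow> (\<forall>x\<in>U. \<forall>i j. pd i (\<lambda>y. w y $ j) x = pd j (\<lambda>y. w y $ i) x)"

text \<open>Electrostatic system, written in a coordinate chart U (open) of the interior of M,
  where f > 0.\<close>
definition electrostatic_system ::
  "(real^'n::finite) set \<Rightarrow> (real^'n \<Rightarrow> real^'n^'n) \<Rightarrow> (real^'n \<Rightarrow> real) \<Rightarrow> (real^'n \<Rightarrow> real^'n) \<Rightarrow> real \<Rightarrow> bool" where
  "electrostatic_system U g f E \<Lambda> \<longleftrightarrow>
     open U \<and> riemannian_metric_on U g \<and> smooth_on U f \<and> (\<forall>i. smooth_on U (\<lambda>x. E x $ i)) \<and>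
     (\<forall>x\<in>U. f x > 0) \<and>
     (\<forall>x\<in>U. \<forall>i j. hess g f i j x = f x * (ricci g i j x - 2 / (real CARD('n) - 1) * \<Lambda> * g x $ i $ j
          + 2 * flat g E x $ i * flat g E x $ j
          - 2 / (real CARD('n) - 1) * ginner g x (E x) (E x) * g x $ i $ j)) \<and>
     (\<forall>x\<in>U. lap g f x = 2 / (real CARD('n) - 1) * ((real CARD('n) - 2) * ginner g x (E x) (E x) - \<Lambda>) * f x) \<and>
     (\<forall>x\<in>U. divv g E x = 0) \<and>
     closed_form_on U (\<lambda>x. f x *\<^sub>R flat g E x)"

end

theory Submission
  imports Defs
begin

text \<open>
  Write \<open>X = \<nabla>f\<close> and \<open>N = \<nabla>\<^sub>X X = \<nabla>|\<nabla>f|\<^sup>2 / 2\<close>; the vector field in question is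
  \<open>V = (2/f) N - 4\<langle>X, E\<rangle> E + 2R/(n(n-1)) X\<close>. Its divergence is expanded with the contracted
  Bochner formula \<open>div N = |\<nabla>\<^sup>2f|\<^sup>2 + \<langle>\<nabla>\<Delta>f, X\<rangle> + Ric(X, X)\<close>. Tracing the equation for
  \<open>\<nabla>\<^sup>2f\<close> and comparing with the one for \<open>\<Delta>f\<close> gives \<open>R = 2\<Lambda> + 2|E|\<^sup>2\<close>, hence
  \<open>\<nabla>\<^sup>2f = f (Ric\<^sub>0 - R/(n(n-1)) g + 2 E\<flat> \<otimes> E\<flat>)\<close> and \<open>\<Delta>f = (2|E|\<^sup>2 - R/(n-1)) f\<close>,
  which turn every term into one in the traceless Ricci tensor \<open>Ric\<^sub>0\<close>, in \<open>E\<close> and in \<open>X\<close>.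
  The two first-order terms \<open>\<langle>\<nabla>\<^sub>X E, E\<rangle>\<close> and \<open>\<langle>X, \<nabla>\<^sub>E E\<rangle>\<close> are tied together by
  \<open>d(f E\<flat>) = 0\<close>, and then everything except the right-hand side cancels.
\<close>

section \<open>Partial derivatives\<close>

lemma pd_eq_derivative: "(h has_derivative D) (at x) \<Longrightarrow> pd i h x = D (axis i 1)"
  unfolding pd_def by (metis frechet_derivative_at)

lemma has_derivative_cong_open:
  assumes "open U" "x \<in> U" "\<And>y. y \<in> U \<Longrightarrow> h1 y = h2 y"
  shows "(h1 has_derivative D) (at x) \<longleftrightarrow> (h2 has_derivative D) (at x)"
  using has_derivative_transform_within_open[OF _ assms(1,2), of h1 D UNIV h2]
        has_derivative_transform_within_open[OF _ assms(1,2), of h2 D UNIV h1] assms(3)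
  by auto

lemma differentiable_cong_open:
  assumes "open U" "x \<in> U" "\<And>y. y \<in> U \<Longrightarrow> h1 y = h2 y"
  shows "h1 differentiable at x \<longleftrightarrow> h2 differentiable at x"
  unfolding differentiable_def using has_derivative_cong_open[OF assms] by simp

lemma pd_cong:
  assumes "open U" "x \<in> U" "\<And>y. y \<in> U \<Longrightarrow> h1 y = h2 y"
  shows "pd i h1 x = pd i h2 x"
  unfolding pd_def frechet_derivative_def using has_derivative_cong_open[OF assms] by simp

lemma pd_const [simp]: "pd i (\<lambda>y. c) x = 0"
  by (simp add: pd_def)

lemma pd_add:
  assumes "h1 differentiable at x" "h2 differentiable at x"
  shows "pd i (\<lambda>y. h1 y + h2 y) x = pd i h1 x + pd i h2 x"
  using pd_eq_derivative[OF has_derivative_add[OF assms[unfolded frechet_derivative_works]]]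
  by (simp add: pd_def)

lemma pd_diff:
  assumes "h1 differentiable at x" "h2 differentiable at x"
  shows "pd i (\<lambda>y. h1 y - h2 y) x = pd i h1 x - pd i h2 x"
  using pd_eq_derivative[OF has_derivative_diff[OF assms[unfolded frechet_derivative_works]]]
  by (simp add: pd_def)

lemma pd_mult:
  assumes "h1 differentiable at x" "h2 differentiable at x"
  shows "pd i (\<lambda>y. h1 y * h2 y) x = h1 x * pd i h2 x + pd i h1 x * h2 x"
  using pd_eq_derivative[OF has_derivative_mult[OF assms[unfolded frechet_derivative_works]]]
  by (simp add: pd_def)

lemma pd_cmult: "h differentiable at x \<Longrightarrow> pd i (\<lambda>y. c * h y) x = c * pd i h x"
  using pd_mult[of "\<lambda>y. c" x h i] by simp

lemma pd_sum:
  assumes "finite S" "\<And>s. s \<in> S \<Longrightarrow> h s differentiable at x"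
  shows "pd i (\<lambda>y. \<Sum>s\<in>S. h s y) x = (\<Sum>s\<in>S. pd i (h s) x)"
proof -
  have "((\<lambda>y. \<Sum>s\<in>S. h s y) has_derivative (\<lambda>v. \<Sum>s\<in>S. frechet_derivative (h s) (at x) v)) (at x)"
    using assms by (intro has_derivative_sum) (simp add: frechet_derivative_works[symmetric])
  from pd_eq_derivative[OF this] show ?thesis by (simp add: pd_def)
qed

lemma pd_inverse:
  assumes "h differentiable at x" "h x \<noteq> 0"
  shows "pd i (\<lambda>y. inverse (h y)) x = - (pd i h x / (h x * h x))"
proof -
  have "((\<lambda>y. inverse (h y)) has_derivative
     (\<lambda>v. - (inverse (h x) * frechet_derivative h (at x) v * inverse (h x)))) (at x)"
    using has_derivative_compose[OF assms(1)[unfolded frechet_derivative_works]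
        has_derivative_inverse'[OF assms(2)]] .
  from pd_eq_derivative[OF this] show ?thesis by (simp add: pd_def divide_inverse mult_ac)
qed

lemma dif_cong: "open U \<Longrightarrow> y \<in> U \<Longrightarrow> (\<And>z. z \<in> U \<Longrightarrow> h1 z = h2 z) \<Longrightarrow> dif h1 y = dif h2 y"
  unfolding dif_def using pd_cong by (metis (no_types, lifting))

lemma dif_mult:
  "a differentiable at y \<Longrightarrow> b differentiable at y \<Longrightarrow> dif (\<lambda>z. a z * b z) y = a y *\<^sub>R dif b y + b y *\<^sub>R dif a y"
  by (simp add: dif_def vec_eq_iff pd_mult)

lemma dif_cmult: "a differentiable at y \<Longrightarrow> dif (\<lambda>z. c * a z) y = c *\<^sub>R dif a y"
  by (simp add: dif_def vec_eq_iff pd_cmult)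

lemma dif_affine: "a differentiable at y \<Longrightarrow> dif (\<lambda>z. c * a z + d) y = c *\<^sub>R dif a y"
  by (simp add: dif_def vec_eq_iff pd_add pd_cmult differentiable_mult)

lemma dif_scale_diff:
  "a differentiable at y \<Longrightarrow> b differentiable at y \<Longrightarrow>
    dif (\<lambda>z. c * a z - d * b z) y = c *\<^sub>R dif a y - d *\<^sub>R dif b y"
  by (simp add: dif_def vec_eq_iff pd_diff pd_cmult differentiable_mult)

lemma dif_inverse:
  "a differentiable at y \<Longrightarrow> a y \<noteq> 0 \<Longrightarrow> dif (\<lambda>z. c / a z) y = (- c / (a y)\<^sup>2) *\<^sub>R dif a y"
  using pd_cmult[of "\<lambda>z. inverse (a z)" y _ c] differentiable_inverse[of a y]
  by (simp add: dif_def vec_eq_iff pd_inverse divide_inverse power2_eq_square)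

section \<open>Smooth functions\<close>

text \<open>The closure properties of \<open>smooth_on\<close> are proved for each finite order \<open>Ck_on k\<close>, by
  induction on \<open>k\<close>.\<close>

definition Ck_on :: "nat \<Rightarrow> (real^'n::finite) set \<Rightarrow> (real^'n \<Rightarrow> real) \<Rightarrow> bool" where
  "Ck_on k U h \<longleftrightarrow> (\<forall>is::'n list. length is \<le> k \<longrightarrow> (\<forall>x\<in>U. foldr pd is h differentiable at x))"

lemma Ck_on_0: "Ck_on 0 U h \<longleftrightarrow> (\<forall>x\<in>U. h differentiable at x)"
  by (simp add: Ck_on_def)

lemma Ck_on_Suc:
  fixes U :: "(real^'n::finite) set"
  shows "Ck_on (Suc k) U h \<longleftrightarrow> (\<forall>x\<in>U. h differentiable at x) \<and> (\<forall>i. Ck_on k U (pd i h))"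
proof
  assume h: "Ck_on (Suc k) U h"
  have "Ck_on k U (pd i h)" for i
    unfolding Ck_on_def
  proof (intro allI impI ballI)
    fix "is" :: "'n list" and x assume "length is \<le> k" "x \<in> U"
    then show "foldr pd is (pd i h) differentiable at x"
      using h[unfolded Ck_on_def, rule_format, of "is @ [i]" x] by simp
  qed
  moreover have "\<forall>x\<in>U. h differentiable at x"
    using h[unfolded Ck_on_def, rule_format, of "[]"] by simp
  ultimately show "(\<forall>x\<in>U. h differentiable at x) \<and> (\<forall>i. Ck_on k U (pd i h))" by blast
next
  assume h: "(\<forall>x\<in>U. h differentiable at x) \<and> (\<forall>i. Ck_on k U (pd i h))"
  show "Ck_on (Suc k) U h"
    unfolding Ck_on_def
  proof (intro allI impI ballI)
    fix "is" :: "'n list" and x assume "length is \<le> Suc k" "x \<in> U"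
    then show "foldr pd is h differentiable at x"
      using h unfolding Ck_on_def by (cases "is" rule: rev_exhaust) auto
  qed
qed

lemma smooth_on_iff_Ck_on: "smooth_on U h \<longleftrightarrow> (\<forall>k. Ck_on k U h)"
  unfolding smooth_on_def Ck_on_def by blast

lemma Ck_on_Suc_imp_Ck_on: "Ck_on (Suc k) U h \<Longrightarrow> Ck_on k U h"
  unfolding Ck_on_def by simp

lemma Ck_on_const: "Ck_on k U (\<lambda>y. c)"
  by (induction k arbitrary: c) (simp_all add: Ck_on_0 Ck_on_Suc pd_def[abs_def])

context
  fixes U :: "(real^'n::finite) set"
  assumes open_U: "open U"
begin

lemma Ck_on_cong:
  assumes "\<And>y. y \<in> U \<Longrightarrow> h1 y = h2 y" "Ck_on k U h1"
  shows "Ck_on k U h2"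
  using assms
proof (induction k arbitrary: h1 h2)
  case 0 then show ?case using differentiable_cong_open[OF open_U, of _ h1 h2] by (simp add: Ck_on_0)
next
  case (Suc k)
  have "Ck_on k U (pd i h2)" for i
  proof (rule Suc.IH)
    show "\<And>y. y \<in> U \<Longrightarrow> pd i h1 y = pd i h2 y" using pd_cong[OF open_U] Suc.prems(1) by blast
    show "Ck_on k U (pd i h1)" using Suc.prems(2) by (simp add: Ck_on_Suc)
  qed
  moreover have "\<forall>x\<in>U. h2 differentiable at x"
    using Suc.prems differentiable_cong_open[OF open_U] unfolding Ck_on_Suc by blast
  ultimately show ?case by (simp add: Ck_on_Suc)
qed

lemma Ck_on_add: "Ck_on k U a \<Longrightarrow> Ck_on k U b \<Longrightarrow> Ck_on k U (\<lambda>y. a y + b y)"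
proof (induction k arbitrary: a b)
  case 0 then show ?case by (simp add: Ck_on_0 differentiable_add)
next
  case (Suc k)
  have "Ck_on k U (pd i (\<lambda>y. a y + b y))" for i
  proof (rule Ck_on_cong)
    show "Ck_on k U (\<lambda>y. pd i a y + pd i b y)"
      by (intro Suc.IH) (use Suc.prems in \<open>simp_all add: Ck_on_Suc\<close>)
    show "\<And>y. y \<in> U \<Longrightarrow> pd i a y + pd i b y = pd i (\<lambda>y. a y + b y) y"
      using Suc.prems by (simp add: Ck_on_Suc pd_add)
  qed
  then show ?case using Suc.prems by (simp add: Ck_on_Suc differentiable_add)
qed

lemma Ck_on_neg: "Ck_on k U a \<Longrightarrow> Ck_on k U (\<lambda>y. - a y)"
proof (induction k arbitrary: a)
  case 0 then show ?case by (simp add: Ck_on_0 differentiable_minus)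
next
  case (Suc k)
  have "Ck_on k U (pd i (\<lambda>y. - a y))" for i
  proof (rule Ck_on_cong)
    show "Ck_on k U (\<lambda>y. - pd i a y)"
      by (intro Suc.IH) (use Suc.prems in \<open>simp add: Ck_on_Suc\<close>)
    show "\<And>y. y \<in> U \<Longrightarrow> - pd i a y = pd i (\<lambda>y. - a y) y"
      using Suc.prems pd_diff[of "\<lambda>y. 0" _ a i] by (simp add: Ck_on_Suc)
  qed
  then show ?case using Suc.prems by (simp add: Ck_on_Suc differentiable_minus)
qed

lemma Ck_on_mult: "Ck_on k U a \<Longrightarrow> Ck_on k U b \<Longrightarrow> Ck_on k U (\<lambda>y. a y * b y)"
proof (induction k arbitrary: a b)
  case 0 then show ?case by (simp add: Ck_on_0 differentiable_mult)
next
  case (Suc k)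
  have "Ck_on k U (pd i (\<lambda>y. a y * b y))" for i
  proof -
    have "Ck_on k U a" "Ck_on k U b" "Ck_on k U (pd i a)" "Ck_on k U (pd i b)"
      using Suc.prems Ck_on_Suc_imp_Ck_on by (auto simp: Ck_on_Suc)
    then have "Ck_on k U (\<lambda>y. a y * pd i b y + pd i a y * b y)"
      by (intro Ck_on_add Suc.IH)
    then show ?thesis
      by (rule Ck_on_cong[rotated]) (use Suc.prems in \<open>simp add: Ck_on_Suc pd_mult\<close>)
  qed
  then show ?case using Suc.prems by (simp add: Ck_on_Suc differentiable_mult)
qed

lemma Ck_on_inverse:
  "Ck_on k U d \<Longrightarrow> (\<And>y. y \<in> U \<Longrightarrow> d y \<noteq> 0) \<Longrightarrow> Ck_on k U (\<lambda>y. inverse (d y))"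
proof (induction k arbitrary: d)
  case 0 then show ?case by (simp add: Ck_on_0 differentiable_inverse)
next
  case (Suc k)
  have "Ck_on k U (pd i (\<lambda>y. inverse (d y)))" for i
  proof -
    have "Ck_on k U (\<lambda>y. inverse (d y))"
      using Suc Ck_on_Suc_imp_Ck_on by blast
    moreover have "Ck_on k U (pd i d)"
      using Suc.prems by (simp add: Ck_on_Suc)
    ultimately have "Ck_on k U (\<lambda>y. - (pd i d y * (inverse (d y) * inverse (d y))))"
      by (intro Ck_on_neg Ck_on_mult)
    then show ?thesis
      by (rule Ck_on_cong[rotated]) (use Suc.prems in \<open>simp add: Ck_on_Suc pd_inverse divide_inverse\<close>)
  qed
  then show ?case using Suc.prems by (simp add: Ck_on_Suc differentiable_inverse)
qed

lemma smooth_on_add: "smooth_on U a \<Longrightarrow> smooth_on U b \<Longrightarrow> smooth_on U (\<lambda>y. a y + b y)"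
  by (simp add: smooth_on_iff_Ck_on Ck_on_add)

lemma smooth_on_diff: "smooth_on U a \<Longrightarrow> smooth_on U b \<Longrightarrow> smooth_on U (\<lambda>y. a y - b y)"
  using Ck_on_add[of _ a "\<lambda>y. - b y"] Ck_on_neg[of _ b] by (simp add: smooth_on_iff_Ck_on)

lemma smooth_on_mult: "smooth_on U a \<Longrightarrow> smooth_on U b \<Longrightarrow> smooth_on U (\<lambda>y. a y * b y)"
  by (simp add: smooth_on_iff_Ck_on Ck_on_mult)

lemma smooth_on_const: "smooth_on U (\<lambda>y. c)"
  by (simp add: smooth_on_iff_Ck_on Ck_on_const)

lemma smooth_on_divide:
  "smooth_on U a \<Longrightarrow> smooth_on U d \<Longrightarrow> (\<And>y. y \<in> U \<Longrightarrow> d y \<noteq> 0) \<Longrightarrow> smooth_on U (\<lambda>y. a y / d y)"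
  using smooth_on_mult[of a "\<lambda>y. inverse (d y)"] Ck_on_inverse[of _ d]
  by (simp add: smooth_on_iff_Ck_on divide_inverse)

lemma smooth_on_sum:
  "finite S \<Longrightarrow> (\<And>s. s \<in> S \<Longrightarrow> smooth_on U (h s)) \<Longrightarrow> smooth_on U (\<lambda>y. \<Sum>s\<in>S. h s y)"
  by (induction S rule: finite_induct) (simp_all add: smooth_on_const smooth_on_add)

lemma smooth_on_sum_UNIV:
  "(\<And>s. smooth_on U (h s)) \<Longrightarrow> smooth_on U (\<lambda>y. \<Sum>s\<in>(UNIV::'a::finite set). h s y)"
  by (rule smooth_on_sum) auto

lemma smooth_on_prod:
  "finite S \<Longrightarrow> (\<And>s. s \<in> S \<Longrightarrow> smooth_on U (h s)) \<Longrightarrow> smooth_on U (\<lambda>y. \<Prod>s\<in>S. h s y)"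
  by (induction S rule: finite_induct) (simp_all add: smooth_on_const smooth_on_mult)

lemma smooth_on_det:
  assumes "\<And>a b. smooth_on U (\<lambda>y. M y $ a $ b)"
  shows "smooth_on U (\<lambda>y. det (M y :: real^'m::finite^'m))"
  unfolding det_def
  by (intro smooth_on_sum smooth_on_mult smooth_on_const smooth_on_prod assms finite_permutations) auto

lemma smooth_on_cong: "(\<And>y. y \<in> U \<Longrightarrow> h1 y = h2 y) \<Longrightarrow> smooth_on U h1 \<Longrightarrow> smooth_on U h2"
  unfolding smooth_on_iff_Ck_on using Ck_on_cong by blast

end

lemma smooth_on_pd: "smooth_on U h \<Longrightarrow> smooth_on U (pd i h)"
  unfolding smooth_on_iff_Ck_on using Ck_on_Suc by blast

lemma smooth_on_imp_differentiable: "smooth_on U h \<Longrightarrow> x \<in> U \<Longrightarrow> h differentiable at x"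
  using Ck_on_0 smooth_on_iff_Ck_on by blast

section \<open>Symmetry of second partial derivatives\<close>

lemma has_real_derivative_along_line:
  fixes h :: "real^'n::finite \<Rightarrow> real"
  assumes "h differentiable at (y + u *\<^sub>R v)"
  shows "((\<lambda>t. h (y + t *\<^sub>R v)) has_real_derivative frechet_derivative h (at (y + u *\<^sub>R v)) v) (at u)"
proof -
  have l: "((\<lambda>t. y + t *\<^sub>R v) has_derivative (\<lambda>t. t *\<^sub>R v)) (at u)"
    by (auto intro!: derivative_eq_intros)
  have "((\<lambda>t. h (y + t *\<^sub>R v)) has_derivative (\<lambda>t. frechet_derivative h (at (y + u *\<^sub>R v)) (t *\<^sub>R v))) (at u)"
    using has_derivative_compose[OF l assms[unfolded frechet_derivative_works]] .
  moreover have "linear (frechet_derivative h (at (y + u *\<^sub>R v)))"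
    using assms by (rule linear_frechet_derivative)
  ultimately have "((\<lambda>t. h (y + t *\<^sub>R v)) has_derivative (\<lambda>t. t * frechet_derivative h (at (y + u *\<^sub>R v)) v)) (at u)"
    by (simp add: linear_cmul)
  moreover have "(\<lambda>t. t * frechet_derivative h (at (y + u *\<^sub>R v)) v) = (*) (frechet_derivative h (at (y + u *\<^sub>R v)) v)"
    by (rule ext) (simp add: mult.commute)
  ultimately show ?thesis
    by (simp add: has_field_derivative_def)
qed

lemma has_real_derivative_along_axis:
  fixes h :: "real^'n::finite \<Rightarrow> real"
  assumes "h differentiable at (y + u *\<^sub>R axis i 1)"
  shows "((\<lambda>t. h (y + t *\<^sub>R axis i 1)) has_real_derivative pd i h (y + u *\<^sub>R axis i 1)) (at u)"
  using has_real_derivative_along_line[OF assms] by (simp add: pd_def)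

definition second_diff :: "(real^'n::finite \<Rightarrow> real) \<Rightarrow> 'n \<Rightarrow> 'n \<Rightarrow> real^'n \<Rightarrow> real \<Rightarrow> real" where
  "second_diff h i j x t = h (x + t *\<^sub>R axis i 1 + t *\<^sub>R axis j 1) - h (x + t *\<^sub>R axis i 1) - h (x + t *\<^sub>R axis j 1) + h x"

lemma second_diff_commute: "second_diff h i j x t = second_diff h j i x t"
  unfolding second_diff_def by (simp add: algebra_simps)

lemma has_real_derivative_on_square:
  fixes h :: "real^'n::finite \<Rightarrow> real"
  assumes "h differentiable at (x + a *\<^sub>R axis i 1 + b *\<^sub>R axis j 1)"
  shows "((\<lambda>u. h (x + u *\<^sub>R axis i 1 + b *\<^sub>R axis j 1))
           has_real_derivative pd i h (x + a *\<^sub>R axis i 1 + b *\<^sub>R axis j 1)) (at a)"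
    and "((\<lambda>v. h (x + a *\<^sub>R axis i 1 + v *\<^sub>R axis j 1))
           has_real_derivative pd j h (x + a *\<^sub>R axis i 1 + b *\<^sub>R axis j 1)) (at b)"
  using has_real_derivative_along_axis[of h "x + b *\<^sub>R axis j 1" a i]
    has_real_derivative_along_axis[of h "x + a *\<^sub>R axis i 1" b j] assms
  by (simp_all add: add_ac)

lemma second_diff_mvt:
  fixes h :: "real^'n::finite \<Rightarrow> real"
  assumes t: "0 < t"
    and square: "\<And>a b. 0 \<le> a \<Longrightarrow> a \<le> t \<Longrightarrow> 0 \<le> b \<Longrightarrow> b \<le> t \<Longrightarrow> x + a *\<^sub>R axis i 1 + b *\<^sub>R axis j 1 \<in> U"
    and dh: "\<And>y. y \<in> U \<Longrightarrow> h differentiable at y"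
    and dph: "\<And>y. y \<in> U \<Longrightarrow> pd i h differentiable at y"
  obtains a b where "0 \<le> a" "a \<le> t" "0 \<le> b" "b \<le> t"
    and "second_diff h i j x t = t * t * pd j (pd i h) (x + a *\<^sub>R axis i 1 + b *\<^sub>R axis j 1)"
proof -
  let ?p = "\<lambda>a b. x + a *\<^sub>R axis i 1 + b *\<^sub>R axis j 1"
  have "\<exists>a>0. a < t \<and> (h (?p t t) - h (?p t 0)) - (h (?p 0 t) - h (?p 0 0))
      = (t - 0) * (pd i h (?p a t) - pd i h (?p a 0))"
  proof (intro MVT2 t DERIV_diff has_real_derivative_on_square(1))
    show "h differentiable at (?p u t)" "h differentiable at (?p u 0)" if "0 \<le> u" "u \<le> t" for u
      using that t dh square[of u t] dh square[of u 0] by simp_all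
  qed
  then obtain a where a: "0 < a" "a < t"
    and "second_diff h i j x t = t * (pd i h (?p a t) - pd i h (?p a 0))"
    by (auto simp: second_diff_def algebra_simps)
  moreover have "\<exists>b>0. b < t \<and> pd i h (?p a t) - pd i h (?p a 0) = (t - 0) * pd j (pd i h) (?p a b)"
    using t a square dph by (intro MVT2 has_real_derivative_on_square(2)) auto
  then obtain b where "0 < b" "b < t" "pd i h (?p a t) - pd i h (?p a 0) = t * pd j (pd i h) (?p a b)"
    by auto
  ultimately show ?thesis
    using that[of a b] by (simp add: mult.assoc)
qed

lemma dist_square_point:
  fixes x :: "real^'n::finite"
  shows "dist (x + a *\<^sub>R axis i 1 + b *\<^sub>R axis j 1) x \<le> \<bar>a\<bar> + \<bar>b\<bar>"
proof -
  have "dist (x + a *\<^sub>R axis i 1 + b *\<^sub>R axis j 1) x = norm (a *\<^sub>R axis i 1 + b *\<^sub>R axis j 1 :: real^'n)"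
    by (simp add: dist_norm add.assoc)
  also have "\<dots> \<le> \<bar>a\<bar> + \<bar>b\<bar>"
    using norm_triangle_ineq[of "a *\<^sub>R axis i 1 :: real^'n" "b *\<^sub>R axis j 1"] by (simp add: norm_axis_1)
  finally show ?thesis .
qed

lemma second_diff_tendsto:
  fixes h :: "real^'n::finite \<Rightarrow> real"
  assumes U: "open U" "x \<in> U"
    and dh: "\<And>y. y \<in> U \<Longrightarrow> h differentiable at y"
    and dph: "\<And>y. y \<in> U \<Longrightarrow> pd i h differentiable at y"
    and cont: "continuous (at x) (pd j (pd i h))"
  shows "((\<lambda>t. second_diff h i j x t / (t * t)) \<longlongrightarrow> pd j (pd i h) x) (at_right 0)"
  unfolding tendsto_iff
proof (intro allI impI)
  fix e :: real assume "e > 0"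
  obtain r where r: "r > 0" "ball x r \<subseteq> U" using U open_contains_ball by blast
  obtain d where d: "d > 0" "\<And>y. dist y x < d \<Longrightarrow> dist (pd j (pd i h) y) (pd j (pd i h) x) < e"
    using cont \<open>e > 0\<close> unfolding continuous_at_eps_delta by blast
  have "dist (second_diff h i j x t / (t * t)) (pd j (pd i h) x) < e" if t: "0 < t" "t < min r d / 2" for t
  proof -
    have near: "dist (x + a *\<^sub>R axis i 1 + b *\<^sub>R axis j 1) x < min r d"
      if "0 \<le> a" "a \<le> t" "0 \<le> b" "b \<le> t" for a b
      using dist_square_point[of x a i b j] that t by linarith
    then have "x + a *\<^sub>R axis i 1 + b *\<^sub>R axis j 1 \<in> U" if "0 \<le> a" "a \<le> t" "0 \<le> b" "b \<le> t" for a b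
      using near[OF that] r(2) by (auto simp: dist_commute subset_iff)
    then obtain a b where "0 \<le> a" "a \<le> t" "0 \<le> b" "b \<le> t"
      and "second_diff h i j x t = t * t * pd j (pd i h) (x + a *\<^sub>R axis i 1 + b *\<^sub>R axis j 1)"
      using second_diff_mvt[OF t(1) _ dh dph] by blast
    then show ?thesis using t(1) near d(2) by simp
  qed
  then show "\<forall>\<^sub>F t in at_right 0. dist (second_diff h i j x t / (t * t)) (pd j (pd i h) x) < e"
    unfolding eventually_at_right_field using r(1) d(1) by (intro exI[of _ "min r d / 2"]) auto
qed

text \<open>Both mixed partial derivatives are limits of the same, symmetric, second difference quotient.\<close>

lemma pd_commute:
  fixes h :: "real^'n::finite \<Rightarrow> real"
  assumes U: "open U" "x \<in> U"
    and dh: "\<And>y. y \<in> U \<Longrightarrow> h differentiable at y"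
    and dph: "\<And>y k. y \<in> U \<Longrightarrow> pd k h differentiable at y"
    and "continuous (at x) (pd j (pd i h))" "continuous (at x) (pd i (pd j h))"
  shows "pd j (pd i h) x = pd i (pd j h) x"
  using second_diff_tendsto[OF U dh dph assms(5)] second_diff_tendsto[OF U dh dph assms(6)]
  by (simp add: second_diff_commute[of h j i] tendsto_unique[OF trivial_limit_at_right_real])

lemma smooth_on_pd_commute:
  assumes "open U" "x \<in> U" "smooth_on U h"
  shows "pd j (pd i h) x = pd i (pd j h) x"
proof (rule pd_commute[OF assms(1,2)])
  show "\<And>y. y \<in> U \<Longrightarrow> h differentiable at y" using assms(3) smooth_on_imp_differentiable by blast
  show "\<And>y k. y \<in> U \<Longrightarrow> pd k h differentiable at y" using assms(3) smooth_on_imp_differentiable smooth_on_pd by blast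
  show "continuous (at x) (pd j (pd i h))" "continuous (at x) (pd i (pd j h))"
    using assms smooth_on_imp_differentiable smooth_on_pd differentiable_imp_continuous_within by blast+
qed

section \<open>Index sums\<close>

lemma sum_kronecker [simp]:
  fixes F :: "'n::finite \<Rightarrow> real"
  shows "(\<Sum>b\<in>UNIV. F b * (if b = j then 1 else 0)) = F j"
    and "(\<Sum>b\<in>UNIV. F b * (if j = b then 1 else 0)) = F j"
    and "(\<Sum>b\<in>UNIV. (if b = j then 1 else 0) * F b) = F j"
    and "(\<Sum>b\<in>UNIV. (if j = b then 1 else 0) * F b) = F j"
  by (simp_all add: if_distrib[of "\<lambda>c. F _ * c"] if_distrib[of "\<lambda>c. c * F _"] cong: if_cong)

lemma sum_rotate3:
  "(\<Sum>a\<in>A. \<Sum>b\<in>B. \<Sum>c\<in>C. F a b c) = (\<Sum>c\<in>C. \<Sum>a\<in>A. \<Sum>b\<in>B. F a b c)"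
  by (subst sum.swap) (simp add: sum.swap[of _ B C])

lemma sum_rotate4:
  "(\<Sum>a\<in>A. \<Sum>b\<in>B. \<Sum>c\<in>C. \<Sum>d\<in>D. F a b c d) = (\<Sum>b\<in>B. \<Sum>c\<in>C. \<Sum>d\<in>D. \<Sum>a\<in>A. F a b c d)"
proof -
  have "(\<Sum>a\<in>A. \<Sum>b\<in>B. \<Sum>c\<in>C. \<Sum>d\<in>D. F a b c d) = (\<Sum>b\<in>B. \<Sum>a\<in>A. \<Sum>c\<in>C. \<Sum>d\<in>D. F a b c d)"
    by (rule sum.swap)
  also have "\<dots> = (\<Sum>b\<in>B. \<Sum>c\<in>C. \<Sum>a\<in>A. \<Sum>d\<in>D. F a b c d)"
    by (rule sum.cong[OF refl]) (rule sum.swap)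
  also have "\<dots> = (\<Sum>b\<in>B. \<Sum>c\<in>C. \<Sum>d\<in>D. \<Sum>a\<in>A. F a b c d)"
    by (rule sum.cong[OF refl], rule sum.cong[OF refl]) (rule sum.swap)
  finally show ?thesis .
qed

lemma contract_inverse_left:
  fixes A B :: "'n::finite \<Rightarrow> 'n \<Rightarrow> real"
  assumes "\<And>i j. (\<Sum>a\<in>UNIV. A i a * B a j) = (if i = j then 1 else 0)"
  shows "(\<Sum>a\<in>UNIV. A i a * (\<Sum>e\<in>UNIV. B a e * F e)) = F i"
proof -
  have "(\<Sum>a\<in>UNIV. A i a * (\<Sum>e\<in>UNIV. B a e * F e)) = (\<Sum>e\<in>UNIV. (\<Sum>a\<in>UNIV. A i a * B a e) * F e)"
    by (simp add: sum_distrib_left sum_distrib_right mult.assoc) (rule sum.swap)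
  also have "\<dots> = F i" by (simp add: assms)
  finally show ?thesis .
qed

lemma contract_inverse_right:
  fixes A B :: "'n::finite \<Rightarrow> 'n \<Rightarrow> real"
  assumes "\<And>i j. (\<Sum>a\<in>UNIV. A i a * B a j) = (if i = j then 1 else 0)"
  shows "(\<Sum>e\<in>UNIV. (\<Sum>a\<in>UNIV. F a * A a e) * B e j) = F j"
proof -
  have "(\<Sum>e\<in>UNIV. (\<Sum>a\<in>UNIV. F a * A a e) * B e j) = (\<Sum>a\<in>UNIV. F a * (\<Sum>e\<in>UNIV. A a e * B e j))"
    by (simp add: sum_distrib_left sum_distrib_right mult.assoc) (rule sum.swap)
  also have "\<dots> = F j" by (simp add: assms)
  finally show ?thesis .
qed

section \<open>Riemannian charts\<close>

locale riemannian_chart =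
  fixes U :: "(real^'n::finite) set" and g :: "real^'n \<Rightarrow> real^'n^'n"
  assumes open_U: "open U" and metric: "riemannian_metric_on U g"
begin

lemma metric_smooth: "smooth_on U (\<lambda>y. g y $ i $ j)"
  using metric by (simp add: riemannian_metric_on_def)

lemma metric_sym: "y \<in> U \<Longrightarrow> g y $ i $ j = g y $ j $ i"
  using metric by (simp add: riemannian_metric_on_def)

lemma pd_metric_sym: "y \<in> U \<Longrightarrow> pd k (\<lambda>z. g z $ i $ j) y = pd k (\<lambda>z. g z $ j $ i) y"
  by (rule pd_cong[OF open_U]) (auto simp: metric_sym)

lemma metric_invertible: "y \<in> U \<Longrightarrow> invertible (g y)"
proof -
  assume y: "y \<in> U"
  have "v = 0" if "g y *v v = 0" for v
    using metric y that unfolding riemannian_metric_on_def by force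
  then have "inj ((*v) (g y))" by (simp add: vec.inj_iff_eq_0)
  then show ?thesis using matrix_left_invertible_injective invertible_left_inverse by blast
qed

lemma metric_ginv_inverse: "y \<in> U \<Longrightarrow> g y ** ginv g y = mat 1 \<and> ginv g y ** g y = mat 1"
  using metric_invertible[of y] unfolding invertible_def ginv_def matrix_inv_def
  by (rule someI_ex)

lemma metric_ginv_sum: "y \<in> U \<Longrightarrow> (\<Sum>k\<in>UNIV. g y $ i $ k * ginv g y $ k $ j) = (if i = j then 1 else 0)"
  using metric_ginv_inverse[of y] by (simp add: matrix_matrix_mult_def mat_def vec_eq_iff)

lemma ginv_metric_sum: "y \<in> U \<Longrightarrow> (\<Sum>k\<in>UNIV. ginv g y $ i $ k * g y $ k $ j) = (if i = j then 1 else 0)"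
  using metric_ginv_inverse[of y] by (simp add: matrix_matrix_mult_def mat_def vec_eq_iff)

lemma ginv_sym: "y \<in> U \<Longrightarrow> ginv g y $ i $ j = ginv g y $ j $ i"
proof -
  assume y: "y \<in> U"
  let ?G = "ginv g y" and ?g = "g y"
  have "transpose ?g = ?g" using metric_sym[OF y] by (simp add: transpose_def vec_eq_iff)
  then have "transpose ?G ** ?g = mat 1"
    using metric_ginv_inverse[OF y] by (metis matrix_transpose_mul transpose_mat)
  then have "transpose ?G = ?G"
    using metric_ginv_inverse[OF y] by (metis matrix_mul_assoc matrix_mul_rid)
  then show ?thesis by (metis transpose_def vec_lambda_beta)
qed

lemma ginv_cramer: "y \<in> U \<Longrightarrow> ginv g y $ k $ j =
   det (\<chi> a b. if b = k then axis j 1 $ a else g y $ a $ b) / det (g y)"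
proof -
  assume y: "y \<in> U"
  have "det (g y) \<noteq> 0" using metric_invertible[OF y] invertible_det_nz by blast
  moreover have "g y *v (ginv g y *v axis j 1) = axis j 1"
    using metric_ginv_inverse[OF y] by (simp add: matrix_vector_mul_assoc)
  ultimately have "ginv g y *v axis j 1 = (\<chi> k. det (\<chi> a b. if b = k then axis j 1 $ a else g y $ a $ b) / det (g y))"
    using cramer by blast
  moreover have "(ginv g y *v axis j 1) $ k = ginv g y $ k $ j"
    by (simp add: matrix_vector_mult_def axis_def)
  ultimately show ?thesis by simp
qed

lemma ginv_smooth: "smooth_on U (\<lambda>y. ginv g y $ k $ j)"
proof -
  have "smooth_on U (\<lambda>y. det (\<chi> a b. if b = k then axis j 1 $ a else g y $ a $ b) / det (g y))"
  proof (rule smooth_on_divide[OF open_U])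
    show "smooth_on U (\<lambda>y. det (\<chi> a b. if b = k then axis j 1 $ a else g y $ a $ b))"
    proof (rule smooth_on_det[OF open_U])
      fix a b
      show "smooth_on U (\<lambda>y. (\<chi> a b. if b = k then axis j 1 $ a else g y $ a $ b) $ a $ b)"
        by (cases "b = k") (simp_all add: smooth_on_const[OF open_U] metric_smooth)
    qed
    show "smooth_on U (\<lambda>y. det (g y))" by (intro smooth_on_det[OF open_U] metric_smooth)
    show "\<And>y. y \<in> U \<Longrightarrow> det (g y) \<noteq> 0" using metric_invertible invertible_det_nz by blast
  qed
  then show ?thesis by (rule smooth_on_cong[OF open_U, rotated]) (simp add: ginv_cramer)
qed

lemma christ_smooth: "smooth_on U (christ g k i j)"
  unfolding christ_def
  by (intro smooth_on_mult[OF open_U] smooth_on_sum_UNIV[OF open_U] smooth_on_const[OF open_U]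
      smooth_on_add[OF open_U] smooth_on_diff[OF open_U] ginv_smooth smooth_on_pd metric_smooth)

lemma christ_sym: "y \<in> U \<Longrightarrow> christ g k i j y = christ g k j i y"
  unfolding christ_def using pd_metric_sym[of y] by (simp add: algebra_simps)

lemma pd_christ_sym: "y \<in> U \<Longrightarrow> pd l (christ g k i j) y = pd l (christ g k j i) y"
  by (rule pd_cong[OF open_U]) (auto simp: christ_sym)

lemma metric_differentiable: "y \<in> U \<Longrightarrow> (\<lambda>z. g z $ i $ j) differentiable at y"
  using smooth_on_imp_differentiable metric_smooth by blast

lemma ginv_differentiable: "y \<in> U \<Longrightarrow> (\<lambda>z. ginv g z $ i $ j) differentiable at y"
  using smooth_on_imp_differentiable ginv_smooth by blast

lemma christ_differentiable: "y \<in> U \<Longrightarrow> christ g k i j differentiable at y"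
  using smooth_on_imp_differentiable christ_smooth by blast

lemma pd_ginv_metric: assumes y: "y \<in> U"
  shows "pd k (\<lambda>z. ginv g z $ i $ j) y =
    - (\<Sum>c\<in>UNIV. (\<Sum>b\<in>UNIV. ginv g y $ i $ b * pd k (\<lambda>z. g z $ b $ c) y) * ginv g y $ c $ j)"
proof -
  have h1: "(\<Sum>b\<in>UNIV. pd k (\<lambda>z. ginv g z $ i $ b) y * g y $ b $ c)
        = - (\<Sum>b\<in>UNIV. ginv g y $ i $ b * pd k (\<lambda>z. g z $ b $ c) y)" for c
  proof -
    have "pd k (\<lambda>z. \<Sum>b\<in>UNIV. ginv g z $ i $ b * g z $ b $ c) y = pd k (\<lambda>z. if i = c then 1 else 0) y"
      by (rule pd_cong[OF open_U y]) (simp add: ginv_metric_sum)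
    also have "\<dots> = 0" by simp
    finally have "pd k (\<lambda>z. \<Sum>b\<in>UNIV. ginv g z $ i $ b * g z $ b $ c) y = 0" .
    moreover have "pd k (\<lambda>z. \<Sum>b\<in>UNIV. ginv g z $ i $ b * g z $ b $ c) y
       = (\<Sum>b\<in>UNIV. ginv g y $ i $ b * pd k (\<lambda>z. g z $ b $ c) y + pd k (\<lambda>z. ginv g z $ i $ b) y * g y $ b $ c)"
      using y by (simp add: pd_sum pd_mult metric_differentiable ginv_differentiable differentiable_mult)
    ultimately show ?thesis by (simp add: sum.distrib eq_neg_iff_add_eq_0 add.commute)
  qed
  have "pd k (\<lambda>z. ginv g z $ i $ j) y =
      (\<Sum>c\<in>UNIV. (\<Sum>b\<in>UNIV. pd k (\<lambda>z. ginv g z $ i $ b) y * g y $ b $ c) * ginv g y $ c $ j)"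
    by (rule contract_inverse_right[symmetric]) (rule metric_ginv_sum[OF y])
  also have "\<dots> = - (\<Sum>c\<in>UNIV. (\<Sum>b\<in>UNIV. ginv g y $ i $ b * pd k (\<lambda>z. g z $ b $ c) y) * ginv g y $ c $ j)"
    by (simp add: h1 sum_negf)
  finally show ?thesis .
qed

lemma metric_christ_lower: assumes y: "y \<in> U"
  shows "(\<Sum>e\<in>UNIV. g y $ a $ e * christ g e k b y) =
     (1/2) * (pd k (\<lambda>z. g z $ b $ a) y + pd b (\<lambda>z. g z $ k $ a) y - pd a (\<lambda>z. g z $ k $ b) y)"
proof -
  have "(\<Sum>e\<in>UNIV. g y $ a $ e * christ g e k b y) =
     (1/2) * (\<Sum>e\<in>UNIV. g y $ a $ e * (\<Sum>l\<in>UNIV. ginv g y $ e $ l *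
       (pd k (\<lambda>z. g z $ b $ l) y + pd b (\<lambda>z. g z $ k $ l) y - pd l (\<lambda>z. g z $ k $ b) y)))"
    by (simp add: christ_def sum_distrib_left mult_ac)
  also have "\<dots> = (1/2) * (pd k (\<lambda>z. g z $ b $ a) y + pd b (\<lambda>z. g z $ k $ a) y - pd a (\<lambda>z. g z $ k $ b) y)"
    by (subst contract_inverse_left[where F="\<lambda>l. pd k (\<lambda>z. g z $ b $ l) y + pd b (\<lambda>z. g z $ k $ l) y - pd l (\<lambda>z. g z $ k $ b) y"])
       (use metric_ginv_sum[OF y] in auto)
  finally show ?thesis .
qed

lemma pd_metric: assumes y: "y \<in> U"
  shows "pd k (\<lambda>z. g z $ a $ b) y =
     (\<Sum>e\<in>UNIV. g y $ a $ e * christ g e k b y) + (\<Sum>e\<in>UNIV. g y $ b $ e * christ g e k a y)"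
  using pd_metric_sym[OF y, of k a b] pd_metric_sym[OF y, of a k b]
    pd_metric_sym[OF y, of b k a]
  unfolding metric_christ_lower[OF y] by (simp add: field_simps)

lemma pd_ginv: assumes y: "y \<in> U"
  shows "pd k (\<lambda>z. ginv g z $ i $ j) y =
     - (\<Sum>b\<in>UNIV. christ g i k b y * ginv g y $ b $ j) - (\<Sum>a\<in>UNIV. ginv g y $ i $ a * christ g j k a y)"
proof -
  let ?G = "\<lambda>a b. ginv g y $ a $ b" and ?g = "\<lambda>a b. g y $ a $ b" and ?C = "\<lambda>e a b. christ g e a b y"
  have "pd k (\<lambda>z. ginv g z $ i $ j) y =
    - (\<Sum>c\<in>UNIV. (\<Sum>b\<in>UNIV. ?G i b * ((\<Sum>e\<in>UNIV. ?g b e * ?C e k c) + (\<Sum>e\<in>UNIV. ?g c e * ?C e k b))) * ?G c j)"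
    by (simp add: pd_ginv_metric[OF y] pd_metric[OF y])
  also have "\<dots> = - (\<Sum>c\<in>UNIV. (\<Sum>b\<in>UNIV. ?G i b * (\<Sum>e\<in>UNIV. ?g b e * ?C e k c)) * ?G c j)
                  - (\<Sum>c\<in>UNIV. (\<Sum>b\<in>UNIV. ?G i b * (\<Sum>e\<in>UNIV. ?g c e * ?C e k b)) * ?G c j)"
    by (simp add: distrib_left distrib_right sum.distrib)
  also have "(\<Sum>c\<in>UNIV. (\<Sum>b\<in>UNIV. ?G i b * (\<Sum>e\<in>UNIV. ?g b e * ?C e k c)) * ?G c j)
      = (\<Sum>c\<in>UNIV. ?C i k c * ?G c j)"
    by (subst contract_inverse_left[where F="\<lambda>e. ?C e k _"]) (use ginv_metric_sum[OF y] in auto)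
  also have "(\<Sum>c\<in>UNIV. (\<Sum>b\<in>UNIV. ?G i b * (\<Sum>e\<in>UNIV. ?g c e * ?C e k b)) * ?G c j)
      = (\<Sum>b\<in>UNIV. ?G i b * (\<Sum>c\<in>UNIV. ?G j c * (\<Sum>e\<in>UNIV. ?g c e * ?C e k b)))"
  proof -
    have "(\<Sum>c\<in>UNIV. (\<Sum>b\<in>UNIV. ?G i b * (\<Sum>e\<in>UNIV. ?g c e * ?C e k b)) * ?G c j)
       = (\<Sum>c\<in>UNIV. \<Sum>b\<in>UNIV. ?G i b * (?G j c * (\<Sum>e\<in>UNIV. ?g c e * ?C e k b)))"
      using ginv_sym[OF y] by (simp add: sum_distrib_right sum_distrib_left mult_ac)
    also have "\<dots> = (\<Sum>b\<in>UNIV. \<Sum>c\<in>UNIV. ?G i b * (?G j c * (\<Sum>e\<in>UNIV. ?g c e * ?C e k b)))"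
      by (rule sum.swap)
    also have "\<dots> = (\<Sum>b\<in>UNIV. ?G i b * (\<Sum>c\<in>UNIV. ?G j c * (\<Sum>e\<in>UNIV. ?g c e * ?C e k b)))"
      by (simp add: sum_distrib_left)
    finally show ?thesis .
  qed
  also have "\<dots> = (\<Sum>b\<in>UNIV. ?G i b * ?C j k b)"
    by (subst contract_inverse_left[where F="\<lambda>e. ?C e k _"]) (use ginv_metric_sum[OF y] in auto)
  finally show ?thesis by simp
qed

end

section \<open>Covariant derivatives\<close>

definition smooth_field_on :: "(real^'n::finite) set \<Rightarrow> (real^'n \<Rightarrow> real^'n) \<Rightarrow> bool" where
  "smooth_field_on U X \<longleftrightarrow> (\<forall>i. smooth_on U (\<lambda>z. X z $ i))"

text \<open>\<open>cov g X j k\<close> is the component \<open>(\<nabla>\<^sub>j X)\<^sup>k\<close> of the covariant derivative,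
  \<open>cov2 g X i j k\<close> is \<open>(\<nabla>\<^sub>i \<nabla>\<^sub>j X)\<^sup>k\<close>, and \<open>cov_along g Y X\<close> is \<open>\<nabla>\<^sub>Y X\<close>.\<close>

definition cov :: "(real^'n::finite \<Rightarrow> real^'n^'n) \<Rightarrow> (real^'n \<Rightarrow> real^'n) \<Rightarrow> 'n \<Rightarrow> 'n \<Rightarrow> real^'n \<Rightarrow> real" where
  "cov g X j k y = pd j (\<lambda>z. X z $ k) y + (\<Sum>l\<in>UNIV. christ g k j l y * X y $ l)"

definition cov2 :: "(real^'n::finite \<Rightarrow> real^'n^'n) \<Rightarrow> (real^'n \<Rightarrow> real^'n) \<Rightarrow> 'n \<Rightarrow> 'n \<Rightarrow> 'n \<Rightarrow> real^'n \<Rightarrow> real" where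
  "cov2 g X i j k y = pd i (cov g X j k) y
     + (\<Sum>m\<in>UNIV. christ g k i m y * cov g X j m y) - (\<Sum>m\<in>UNIV. christ g m i j y * cov g X m k y)"

definition cov_along :: "(real^'n::finite \<Rightarrow> real^'n^'n) \<Rightarrow> (real^'n \<Rightarrow> real^'n) \<Rightarrow> (real^'n \<Rightarrow> real^'n) \<Rightarrow> real^'n \<Rightarrow> real^'n" where
  "cov_along g Y X y = (\<chi> k. \<Sum>j\<in>UNIV. Y y $ j * cov g X j k y)"

definition bilin :: "('n::finite \<Rightarrow> 'n \<Rightarrow> real) \<Rightarrow> real^'n \<Rightarrow> real^'n \<Rightarrow> real" where
  "bilin T v w = (\<Sum>i\<in>UNIV. \<Sum>j\<in>UNIV. T i j * v $ i * w $ j)"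

lemma ginner_eq_bilin: "ginner g y v w = bilin (\<lambda>i j. g y $ i $ j) v w"
  by (simp add: ginner_def bilin_def)

lemma grad_component: "grad g h y $ k = (\<Sum>d\<in>UNIV. ginv g y $ k $ d * pd d h y)"
  by (simp add: grad_def sharp_def dif_def)

lemma sharp_scaleR: "sharp g (\<lambda>y. c y *\<^sub>R w y) z = c z *\<^sub>R sharp g w z"
  by (simp add: sharp_def vec_eq_iff sum_distrib_left mult_ac)

lemma sharp_diff_add:
  "sharp g (\<lambda>y. w1 y - w2 y + w3 y) z = sharp g w1 z - sharp g w2 z + sharp g w3 z"
  by (simp add: sharp_def vec_eq_iff algebra_simps sum.distrib sum_subtractf)

lemma divv_eq_sum_cov: "divv g X y = (\<Sum>k\<in>UNIV. cov g X k k y)"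
  by (simp add: divv_def cov_def sum.distrib)

lemma divv_cong:
  assumes "open U" "y \<in> U" "\<And>z. z \<in> U \<Longrightarrow> X z = Y z"
  shows "divv g X y = divv g Y y"
  using pd_cong[OF assms(1,2), of "\<lambda>z. X z $ _" "\<lambda>z. Y z $ _"] assms by (simp add: divv_def)

lemma divv_scaleR:
  assumes "\<And>i. (\<lambda>z. X z $ i) differentiable at y" "\<phi> differentiable at y"
  shows "divv g (\<lambda>z. \<phi> z *\<^sub>R X z) y = \<phi> y * divv g X y + dif \<phi> y \<bullet> X y"
  using assms
  by (simp add: divv_def dif_def inner_vec_def pd_mult sum.distrib distrib_left sum_distrib_left mult_ac)

lemma divv_scaleR_diff_add:
  assumes "\<And>i. (\<lambda>z. X z $ i) differentiable at y" "\<And>i. (\<lambda>z. Y z $ i) differentiable at y"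
    "\<And>i. (\<lambda>z. Z z $ i) differentiable at y"
    and "a differentiable at y" "b differentiable at y" "c differentiable at y"
  shows "divv g (\<lambda>z. a z *\<^sub>R X z - b z *\<^sub>R Y z + c z *\<^sub>R Z z) y
    = (a y * divv g X y + dif a y \<bullet> X y) - (b y * divv g Y y + dif b y \<bullet> Y y) + (c y * divv g Z y + dif c y \<bullet> Z y)"
proof -
  have "divv g (\<lambda>z. a z *\<^sub>R X z - b z *\<^sub>R Y z + c z *\<^sub>R Z z) y
    = divv g (\<lambda>z. a z *\<^sub>R X z) y - divv g (\<lambda>z. b z *\<^sub>R Y z) y + divv g (\<lambda>z. c z *\<^sub>R Z z) y"
    using assms by (simp add: divv_def pd_add pd_diff differentiable_mult differentiable_diff
        sum.distrib sum_subtractf algebra_simps)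
  then show ?thesis using assms by (simp add: divv_scaleR)
qed

lemma ginner_cov_along:
  "ginner g y (cov_along g W X y) v = (\<Sum>j\<in>UNIV. W y $ j * ginner g y (\<chi> k. cov g X j k y) v)"
  unfolding ginner_def cov_along_def
  by (simp add: sum_distrib_left sum_distrib_right mult_ac) (subst sum_rotate3, simp add: mult_ac)

context riemannian_chart
begin

lemma smooth_field_cov: "smooth_field_on U X \<Longrightarrow> smooth_on U (cov g X j k)"
  unfolding smooth_field_on_def cov_def[abs_def]
  by (intro smooth_on_add[OF open_U] smooth_on_sum_UNIV[OF open_U] smooth_on_mult[OF open_U]
      smooth_on_pd christ_smooth) auto

lemma pd_cov:
  assumes y: "y \<in> U" and X: "smooth_field_on U X"
  shows "pd i (cov g X j k) y = pd i (pd j (\<lambda>z. X z $ k)) y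
     + (\<Sum>l\<in>UNIV. christ g k j l y * pd i (\<lambda>z. X z $ l) y + pd i (christ g k j l) y * X y $ l)"
proof -
  have "(\<lambda>z. X z $ l) differentiable at y" "pd j (\<lambda>z. X z $ l) differentiable at y" for j l
    using X y smooth_on_imp_differentiable smooth_on_pd unfolding smooth_field_on_def by blast+
  then show ?thesis
    unfolding cov_def[abs_def] using christ_differentiable[OF y]
    by (simp add: pd_add pd_sum pd_mult differentiable_sum differentiable_mult)
qed

lemma pd_divv:
  assumes y: "y \<in> U" and X: "smooth_field_on U X"
  shows "pd j (divv g X) y = (\<Sum>i\<in>UNIV. pd j (pd i (\<lambda>z. X z $ i)) y)
     + (\<Sum>i\<in>UNIV. \<Sum>l\<in>UNIV. christ g i i l y * pd j (\<lambda>z. X z $ l) y + pd j (christ g i i l) y * X y $ l)"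
proof -
  have "(\<lambda>z. X z $ l) differentiable at y" "pd j (\<lambda>z. X z $ l) differentiable at y" for j l
    using X y smooth_on_imp_differentiable smooth_on_pd unfolding smooth_field_on_def by blast+
  then show ?thesis
    unfolding divv_def[abs_def] using christ_differentiable[OF y]
    by (simp add: pd_add pd_sum pd_mult differentiable_sum differentiable_mult)
qed

lemma ricci_identity:
  assumes y: "y \<in> U" and X: "smooth_field_on U X"
  shows "(\<Sum>k\<in>UNIV. cov2 g X k j k y) - pd j (divv g X) y = (\<Sum>l\<in>UNIV. ricci g l j y * X y $ l)"
proof -
  define \<Gamma> where "\<Gamma> a b c = christ g a b c y" for a b c
  define d\<Gamma> where "d\<Gamma> d a b c = pd d (christ g a b c) y" for d a b c
  define dX where "dX a b = pd a (\<lambda>z. X z $ b) y" for a b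
  define x where "x l = X y $ l" for l
  have sym: "\<Gamma> a b c = \<Gamma> a c b" "d\<Gamma> d a b c = d\<Gamma> d a c b" for a b c d
    using christ_sym[OF y] pd_christ_sym[OF y] by (simp_all add: \<Gamma>_def d\<Gamma>_def)
  have "(\<Sum>k\<in>UNIV. pd k (pd j (\<lambda>z. X z $ k)) y) = (\<Sum>k\<in>UNIV. pd j (pd k (\<lambda>z. X z $ k)) y)"
    using smooth_on_pd_commute[OF open_U y] X unfolding smooth_field_on_def by simp
  moreover have "(\<Sum>k\<in>UNIV. \<Sum>l\<in>UNIV. \<Gamma> k j l * dX k l) = (\<Sum>k\<in>UNIV. \<Sum>m\<in>UNIV. \<Gamma> m k j * dX m k)"
    by (subst sum.swap) (simp add: sym)
  moreover have "(\<Sum>k\<in>UNIV. \<Sum>l\<in>UNIV. d\<Gamma> k k j l * x l) = (\<Sum>l\<in>UNIV. \<Sum>k\<in>UNIV. d\<Gamma> k k l j * x l)"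
    by (subst sum.swap) (simp add: sym)
  moreover have "(\<Sum>k\<in>UNIV. \<Sum>l\<in>UNIV. d\<Gamma> j k k l * x l) = (\<Sum>l\<in>UNIV. \<Sum>k\<in>UNIV. d\<Gamma> j k l k * x l)"
    by (subst sum.swap) (simp add: sym)
  moreover have "(\<Sum>k\<in>UNIV. \<Sum>m\<in>UNIV. \<Sum>l\<in>UNIV. \<Gamma> k k m * \<Gamma> m j l * x l)
      = (\<Sum>l\<in>UNIV. \<Sum>k\<in>UNIV. \<Sum>m\<in>UNIV. \<Gamma> k k m * \<Gamma> m l j * x l)"
    by (subst sum.swap, subst (2) sum.swap) (simp add: sym)
  moreover have "(\<Sum>k\<in>UNIV. \<Sum>m\<in>UNIV. \<Sum>l\<in>UNIV. \<Gamma> m k j * \<Gamma> k m l * x l)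
      = (\<Sum>l\<in>UNIV. \<Sum>k\<in>UNIV. \<Sum>m\<in>UNIV. \<Gamma> k j m * \<Gamma> m l k * x l)"
    by (subst sum.swap, subst (2) sum.swap, subst (3) sum.swap) (simp add: sym mult_ac)
  ultimately show ?thesis
    unfolding cov2_def pd_cov[OF y X] pd_divv[OF y X] cov_def ricci_def
    unfolding \<Gamma>_def[symmetric] d\<Gamma>_def[symmetric] dX_def[symmetric] x_def[symmetric]
    by (simp add: sum.distrib sum_subtractf distrib_left distrib_right left_diff_distrib right_diff_distrib
        sum_distrib_left sum_distrib_right mult_ac)
qed

lemma divv_cov_along_self_expand:
  assumes y: "y \<in> U" and X: "smooth_field_on U X"
  shows "divv g (cov_along g X X) y = (\<Sum>j\<in>UNIV. \<Sum>k\<in>UNIV. cov g X k j y * cov g X j k y)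
     + (\<Sum>j\<in>UNIV. X y $ j * (\<Sum>k\<in>UNIV. cov2 g X k j k y))"
proof -
  define \<Gamma> where "\<Gamma> a b c = christ g a b c y" for a b c
  define C where "C a b = cov g X a b y" for a b
  define dC where "dC k a b = pd k (cov g X a b) y" for k a b
  define x where "x a = X y $ a" for a
  have "(\<lambda>z. X z $ i) differentiable at y" "cov g X a b differentiable at y" for i a b
    using X smooth_field_cov[OF X] y smooth_on_imp_differentiable
    unfolding smooth_field_on_def by blast+
  moreover have "pd k (\<lambda>z. X z $ j) y = C k j - (\<Sum>l\<in>UNIV. \<Gamma> j k l * x l)" for k j
    by (simp add: C_def cov_def \<Gamma>_def x_def)
  ultimately have "divv g (cov_along g X X) y =
     (\<Sum>k\<in>UNIV. \<Sum>j\<in>UNIV. x j * dC k j k) + (\<Sum>k\<in>UNIV. \<Sum>j\<in>UNIV. C k j * C j k)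
     - (\<Sum>k\<in>UNIV. \<Sum>j\<in>UNIV. \<Sum>l\<in>UNIV. \<Gamma> j k l * x l * C j k)
     + (\<Sum>k\<in>UNIV. \<Sum>m\<in>UNIV. \<Sum>j\<in>UNIV. \<Gamma> k k m * (x j * C j m))"
    unfolding divv_def cov_along_def
    by (simp add: pd_sum pd_mult differentiable_mult sum.distrib sum_subtractf
        left_diff_distrib right_diff_distrib sum_distrib_right sum_distrib_left C_def dC_def x_def \<Gamma>_def mult_ac)
  also have "\<dots> = (\<Sum>j\<in>UNIV. \<Sum>k\<in>UNIV. x j * dC k j k) + (\<Sum>j\<in>UNIV. \<Sum>k\<in>UNIV. C k j * C j k)
     - (\<Sum>j\<in>UNIV. \<Sum>k\<in>UNIV. \<Sum>m\<in>UNIV. \<Gamma> m k j * x j * C m k)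
     + (\<Sum>j\<in>UNIV. \<Sum>k\<in>UNIV. \<Sum>m\<in>UNIV. \<Gamma> k k m * (x j * C j m))"
    unfolding sum.swap[of "\<lambda>k j. x j * dC k j k"] sum.swap[of "\<lambda>k j. C k j * C j k"]
      sum_rotate3[of "\<lambda>k j l. \<Gamma> j k l * x l * C j k"] sum_rotate3[of "\<lambda>k m j. \<Gamma> k k m * (x j * C j m)"] ..
  also have "\<dots> = (\<Sum>j\<in>UNIV. \<Sum>k\<in>UNIV. cov g X k j y * cov g X j k y)
     + (\<Sum>j\<in>UNIV. X y $ j * (\<Sum>k\<in>UNIV. cov2 g X k j k y))"
    by (simp add: cov2_def sum.distrib sum_subtractf right_diff_distrib distrib_left sum_distrib_left
        C_def dC_def x_def \<Gamma>_def mult_ac)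
  finally show ?thesis .
qed

lemma divv_cov_along_self:
  assumes y: "y \<in> U" and X: "smooth_field_on U X"
  shows "divv g (cov_along g X X) y = (\<Sum>j\<in>UNIV. \<Sum>k\<in>UNIV. cov g X k j y * cov g X j k y)
     + dif (divv g X) y \<bullet> X y + bilin (\<lambda>i j. ricci g i j y) (X y) (X y)"
proof -
  have "(\<Sum>k\<in>UNIV. cov2 g X k j k y) = pd j (divv g X) y + (\<Sum>l\<in>UNIV. ricci g l j y * X y $ l)" for j
    using ricci_identity[OF y X, of j] by simp
  then show ?thesis
    unfolding divv_cov_along_self_expand[OF y X]
    by (simp add: bilin_def dif_def inner_vec_def distrib_left sum.distrib sum_distrib_left mult_ac)
      (subst sum.swap, simp add: mult_ac)
qed

lemma ginner_eq_flat: "y \<in> U \<Longrightarrow> ginner g y (X y) w = (\<Sum>b\<in>UNIV. flat g X y $ b * w $ b)"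
  unfolding ginner_def flat_def using metric_sym
  by (subst sum.swap) (simp add: sum_distrib_left sum_distrib_right mult_ac)

lemma ginner_commute: "y \<in> U \<Longrightarrow> ginner g y v w = ginner g y w v"
  unfolding ginner_def using metric_sym by (subst sum.swap) (simp add: mult_ac)

lemma smooth_field_flat: "smooth_field_on U X \<Longrightarrow> smooth_field_on U (flat g X)"
  unfolding smooth_field_on_def flat_def
  by (simp add: smooth_on_sum_UNIV[OF open_U] smooth_on_mult[OF open_U] metric_smooth)

lemma pd_flat:
  assumes y: "y \<in> U" and X: "smooth_field_on U X"
  shows "pd i (\<lambda>z. flat g X z $ j) y
    = (\<Sum>b\<in>UNIV. g y $ j $ b * cov g X i b y) + (\<Sum>e\<in>UNIV. christ g e i j y * flat g X y $ e)"
proof -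
  define \<Gamma> where "\<Gamma> a b c = christ g a b c y" for a b c
  define G where "G a b = g y $ a $ b" for a b
  define x where "x a = X y $ a" for a
  have "(\<lambda>z. X z $ a) differentiable at y" for a
    using X y smooth_on_imp_differentiable unfolding smooth_field_on_def by blast
  then have "pd i (\<lambda>z. flat g X z $ j) y = (\<Sum>l\<in>UNIV. G j l * pd i (\<lambda>z. X z $ l) y)
     + (\<Sum>l\<in>UNIV. \<Sum>e\<in>UNIV. G j e * \<Gamma> e i l * x l) + (\<Sum>l\<in>UNIV. \<Sum>e\<in>UNIV. G l e * \<Gamma> e i j * x l)"
    unfolding flat_def using metric_differentiable[OF y]
    by (simp add: pd_sum pd_mult differentiable_mult pd_metric[OF y] sum.distrib distrib_right
        sum_distrib_right \<Gamma>_def G_def x_def)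
  also have "\<dots> = (\<Sum>b\<in>UNIV. g y $ j $ b * cov g X i b y) + (\<Sum>e\<in>UNIV. christ g e i j y * flat g X y $ e)"
    unfolding sum.swap[of "\<lambda>l e. G j e * \<Gamma> e i l * x l"] sum.swap[of "\<lambda>l e. G l e * \<Gamma> e i j * x l"]
    using metric_sym[OF y]
    by (simp add: cov_def flat_def distrib_left sum.distrib sum_distrib_left \<Gamma>_def G_def x_def mult_ac)
  finally show ?thesis .
qed

lemma pd_ginner:
  assumes y: "y \<in> U" and X: "smooth_field_on U X" and Z: "smooth_field_on U Z"
  shows "pd j (\<lambda>z. ginner g z (X z) (Z z)) y
    = ginner g y (\<chi> k. cov g X j k y) (Z y) + ginner g y (X y) (\<chi> k. cov g Z j k y)"
proof -
  have "(\<lambda>z. flat g X z $ b) differentiable at y" "(\<lambda>z. Z z $ b) differentiable at y" for b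
    using smooth_field_flat[OF X] Z y smooth_on_imp_differentiable unfolding smooth_field_on_def by blast+
  then have "pd j (\<lambda>z. \<Sum>b\<in>UNIV. flat g X z $ b * Z z $ b) y
     = (\<Sum>b\<in>UNIV. flat g X y $ b * pd j (\<lambda>z. Z z $ b) y + pd j (\<lambda>z. flat g X z $ b) y * Z y $ b)"
    by (simp add: pd_sum pd_mult differentiable_mult)
  also have "\<dots> = (\<Sum>b\<in>UNIV. flat g X y $ b * cov g Z j b y)
     + (\<Sum>b\<in>UNIV. \<Sum>c\<in>UNIV. g y $ b $ c * cov g X j c y * Z y $ b)"
    unfolding pd_flat[OF y X] cov_def
    by (simp add: distrib_left distrib_right sum.distrib sum_distrib_left sum_distrib_right mult_ac)
      (subst sum.swap, simp add: mult_ac)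
  also have "\<dots> = ginner g y (\<chi> k. cov g X j k y) (Z y) + ginner g y (X y) (\<chi> k. cov g Z j k y)"
    unfolding ginner_eq_flat[OF y, of X] using metric_sym[OF y]
    by (simp add: ginner_def sum_distrib_right) (subst sum.swap, simp add: mult_ac)
  finally show ?thesis
    using pd_cong[OF open_U y, of "\<lambda>z. ginner g z (X z) (Z z)"] ginner_eq_flat by simp
qed

lemma sharp_flat: "y \<in> U \<Longrightarrow> sharp g (flat g X) y = X y"
  unfolding sharp_def flat_def vec_eq_iff
  using contract_inverse_left[of "\<lambda>a b. ginv g y $ a $ b" "\<lambda>a b. g y $ a $ b"] ginv_metric_sum
  by simp

lemma ginner_sharp: assumes y: "y \<in> U" shows "ginner g y (sharp g w y) v = w y \<bullet> v"
proof -
  have "ginner g y (sharp g w y) v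
      = (\<Sum>j\<in>UNIV. (\<Sum>i\<in>UNIV. (\<Sum>d\<in>UNIV. w y $ d * ginv g y $ d $ i) * g y $ i $ j) * v $ j)"
    unfolding ginner_def sharp_def using ginv_sym[OF y]
    by (subst sum.swap) (simp add: sum_distrib_left sum_distrib_right mult_ac)
  also have "\<dots> = w y \<bullet> v"
    using contract_inverse_right[of "\<lambda>a b. ginv g y $ a $ b" "\<lambda>a b. g y $ a $ b"] ginv_metric_sum[OF y]
    by (simp add: inner_vec_def)
  finally show ?thesis .
qed

lemma ginner_grad: "y \<in> U \<Longrightarrow> ginner g y (grad g h y) v = dif h y \<bullet> v"
  unfolding grad_def by (rule ginner_sharp)

lemma smooth_field_grad: "smooth_on U h \<Longrightarrow> smooth_field_on U (grad g h)"
  unfolding smooth_field_on_def grad_component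
  by (intro allI smooth_on_sum_UNIV[OF open_U] smooth_on_mult[OF open_U] ginv_smooth smooth_on_pd)

lemma hess_sym: "y \<in> U \<Longrightarrow> smooth_on U h \<Longrightarrow> hess g h i j y = hess g h j i y"
  unfolding hess_def using smooth_on_pd_commute[OF open_U, of y h i j] christ_sym[of y] by simp

lemma cov_grad:
  assumes y: "y \<in> U" and h: "smooth_on U h"
  shows "cov g (grad g h) j k y = (\<Sum>d\<in>UNIV. ginv g y $ k $ d * hess g h j d y)"
proof -
  define \<Gamma> where "\<Gamma> a b c = christ g a b c y" for a b c
  define G where "G a b = ginv g y $ a $ b" for a b
  define dh where "dh a = pd a h y" for a
  have "pd a h differentiable at y" for a
    using h y smooth_on_imp_differentiable smooth_on_pd by blast
  then have "pd j (\<lambda>z. grad g h z $ k) y = (\<Sum>d\<in>UNIV. G k d * pd j (pd d h) y)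
     - (\<Sum>d\<in>UNIV. \<Sum>b\<in>UNIV. \<Gamma> k j b * G b d * dh d) - (\<Sum>d\<in>UNIV. \<Sum>a\<in>UNIV. G k a * \<Gamma> d j a * dh d)"
    unfolding grad_component using ginv_differentiable[OF y]
    by (simp add: pd_sum pd_mult differentiable_mult pd_ginv[OF y] sum.distrib
        sum_subtractf sum_negf distrib_right left_diff_distrib sum_distrib_right G_def \<Gamma>_def dh_def)
  moreover have "(\<Sum>l\<in>UNIV. \<Gamma> k j l * (\<Sum>d\<in>UNIV. G l d * dh d)) = (\<Sum>d\<in>UNIV. \<Sum>b\<in>UNIV. \<Gamma> k j b * G b d * dh d)"
    by (simp add: sum_distrib_left mult_ac) (rule sum.swap)
  moreover have "(\<Sum>a\<in>UNIV. G k a * (\<Sum>d\<in>UNIV. \<Gamma> d j a * dh d)) = (\<Sum>d\<in>UNIV. \<Sum>a\<in>UNIV. G k a * \<Gamma> d j a * dh d)"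
    by (simp add: sum_distrib_left mult_ac) (rule sum.swap)
  ultimately show ?thesis
    by (simp add: cov_def grad_component hess_def right_diff_distrib sum_subtractf G_def \<Gamma>_def dh_def)
qed

lemma metric_cov_grad:
  assumes y: "y \<in> U" and h: "smooth_on U h"
  shows "(\<Sum>b\<in>UNIV. g y $ a $ b * cov g (grad g h) j b y) = hess g h j a y"
  unfolding cov_grad[OF y h]
  using contract_inverse_left[of "\<lambda>a b. g y $ a $ b" "\<lambda>a b. ginv g y $ a $ b" a "\<lambda>d. hess g h j d y"]
    metric_ginv_sum[OF y]
  by simp

lemma divv_grad: "y \<in> U \<Longrightarrow> smooth_on U h \<Longrightarrow> divv g (grad g h) y = lap g h y"
  unfolding divv_eq_sum_cov lap_def by (simp add: cov_grad)

lemma ginner_cov_grad: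
  assumes y: "y \<in> U" and h: "smooth_on U h"
  shows "ginner g y v (\<chi> k. cov g (grad g h) j k y) = (\<Sum>a\<in>UNIV. v $ a * hess g h a j y)"
proof -
  have "ginner g y v (\<chi> k. cov g (grad g h) j k y)
      = (\<Sum>a\<in>UNIV. v $ a * (\<Sum>b\<in>UNIV. g y $ a $ b * cov g (grad g h) j b y))"
    by (simp add: ginner_def sum_distrib_left mult_ac)
  then show ?thesis by (simp add: metric_cov_grad[OF y h] hess_sym[OF y h, of j])
qed

lemma ginner_cov_along_grad:
  assumes y: "y \<in> U" and h: "smooth_on U h"
  shows "ginner g y (cov_along g Z (grad g h) y) w = bilin (\<lambda>i j. hess g h i j y) w (Z y)"
proof -
  have "ginner g y (cov_along g Z (grad g h) y) w = (\<Sum>j\<in>UNIV. Z y $ j * ginner g y w (\<chi> k. cov g (grad g h) j k y))"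
    unfolding ginner_commute[OF y, of _ w]
    by (simp add: ginner_def cov_along_def sum_distrib_left mult_ac) (subst sum_rotate3, simp add: mult_ac)
  also have "\<dots> = (\<Sum>j\<in>UNIV. \<Sum>a\<in>UNIV. hess g h a j y * w $ a * Z y $ j)"
    by (simp add: ginner_cov_grad[OF y h] sum_distrib_left mult_ac)
  also have "\<dots> = bilin (\<lambda>i j. hess g h i j y) w (Z y)"
    unfolding bilin_def by (rule sum.swap)
  finally show ?thesis .
qed

lemma dif_ginner:
  assumes y: "y \<in> U" and X: "smooth_field_on U X" and Z: "smooth_field_on U Z"
  shows "dif (\<lambda>z. ginner g z (X z) (Z z)) y \<bullet> W y
    = ginner g y (cov_along g W X y) (Z y) + ginner g y (X y) (cov_along g W Z y)"
  unfolding ginner_commute[OF y, of "X y"] ginner_cov_along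
  by (simp add: dif_def inner_vec_def pd_ginner[OF y X Z] ginner_commute[OF y, of "X y"]
      distrib_left sum.distrib mult_ac)

lemma pd_norm_grad:
  assumes y: "y \<in> U" and h: "smooth_on U h"
  shows "pd j (\<lambda>z. ginner g z (grad g h z) (grad g h z)) y = 2 * (\<Sum>a\<in>UNIV. grad g h y $ a * hess g h a j y)"
  using pd_ginner[OF y smooth_field_grad[OF h] smooth_field_grad[OF h], of j]
  by (simp add: ginner_commute[OF y, of "\<chi> k. _ k"] ginner_cov_grad[OF y h])

lemma sharp_dif_norm_grad:
  assumes y: "y \<in> U" and h: "smooth_on U h"
  shows "sharp g (dif (\<lambda>z. ginner g z (grad g h z) (grad g h z))) y
    = 2 *\<^sub>R cov_along g (grad g h) (grad g h) y"
proof -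
  have "(\<Sum>j\<in>UNIV. ginv g y $ i $ j * (\<Sum>a\<in>UNIV. grad g h y $ a * hess g h a j y))
      = (\<Sum>a\<in>UNIV. grad g h y $ a * cov g (grad g h) a i y)" for i
    unfolding cov_grad[OF y h] by (simp add: sum_distrib_left mult_ac) (rule sum.swap)
  then show ?thesis
    by (simp add: sharp_def dif_def cov_along_def pd_norm_grad[OF y h] vec_eq_iff mult.left_commute
        flip: sum_distrib_left)
qed

lemma sum_cov_grad_eq_tnorm2_hess:
  assumes y: "y \<in> U" and h: "smooth_on U h"
  shows "(\<Sum>j\<in>UNIV. \<Sum>k\<in>UNIV. cov g (grad g h) k j y * cov g (grad g h) j k y) = tnorm2 g (hess g h) y"
proof -
  let ?T = "\<lambda>j k d e. ginv g y $ j $ d * hess g h k d y * (ginv g y $ k $ e * hess g h j e y)"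
  have "(\<Sum>j\<in>UNIV. \<Sum>k\<in>UNIV. cov g (grad g h) k j y * cov g (grad g h) j k y)
      = (\<Sum>j\<in>UNIV. \<Sum>k\<in>UNIV. \<Sum>e\<in>UNIV. \<Sum>d\<in>UNIV. ?T j k d e)"
    unfolding cov_grad[OF y h] by (simp add: sum_distrib_left sum_distrib_right)
  also have "\<dots> = (\<Sum>k\<in>UNIV. \<Sum>e\<in>UNIV. \<Sum>d\<in>UNIV. \<Sum>j\<in>UNIV. ?T j k d e)"
    by (rule sum_rotate4)
  also have "\<dots> = (\<Sum>k\<in>UNIV. \<Sum>d\<in>UNIV. \<Sum>e\<in>UNIV. \<Sum>j\<in>UNIV. ?T j k d e)"
    by (rule sum.cong[OF refl]) (rule sum.swap)
  also have "\<dots> = tnorm2 g (hess g h) y"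
    unfolding tnorm2_def using ginv_sym[OF y] hess_sym[OF y h] by (simp add: mult_ac)
  finally show ?thesis .
qed

lemma divv_cov_along_grad:
  assumes y: "y \<in> U" and h: "smooth_on U h"
  shows "divv g (cov_along g (grad g h) (grad g h)) y = tnorm2 g (hess g h) y
     + dif (divv g (grad g h)) y \<bullet> grad g h y + bilin (\<lambda>i j. ricci g i j y) (grad g h y) (grad g h y)"
  using divv_cov_along_self[OF y smooth_field_grad[OF h]] sum_cov_grad_eq_tnorm2_hess[OF y h] by simp

lemma smooth_on_ginner:
  "smooth_field_on U X \<Longrightarrow> smooth_field_on U Z \<Longrightarrow> smooth_on U (\<lambda>z. ginner g z (X z) (Z z))"
  unfolding ginner_def smooth_field_on_def
  by (intro smooth_on_sum_UNIV[OF open_U] smooth_on_mult[OF open_U] metric_smooth) auto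

lemma smooth_field_cov_along:
  "smooth_field_on U Y \<Longrightarrow> smooth_field_on U X \<Longrightarrow> smooth_field_on U (cov_along g Y X)"
  using smooth_field_cov[of X] unfolding smooth_field_on_def cov_along_def
  by (simp add: smooth_on_sum_UNIV[OF open_U] smooth_on_mult[OF open_U])

lemma ginner_cov_along_eq_sum:
  assumes y: "y \<in> U"
  shows "ginner g y (cov_along g W Z y) v = (\<Sum>i\<in>UNIV. \<Sum>j\<in>UNIV. W y $ i * v $ j * (\<Sum>b\<in>UNIV. g y $ j $ b * cov g Z i b y))"
proof -
  have "ginner g y (cov_along g W Z y) v
      = (\<Sum>a\<in>UNIV. \<Sum>b\<in>UNIV. \<Sum>i\<in>UNIV. g y $ a $ b * W y $ i * cov g Z i a y * v $ b)"
    by (simp add: ginner_def cov_along_def sum_distrib_left sum_distrib_right mult_ac)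
  also have "\<dots> = (\<Sum>i\<in>UNIV. \<Sum>a\<in>UNIV. \<Sum>b\<in>UNIV. g y $ a $ b * W y $ i * cov g Z i a y * v $ b)"
    by (rule sum_rotate3)
  also have "\<dots> = (\<Sum>i\<in>UNIV. \<Sum>b\<in>UNIV. \<Sum>a\<in>UNIV. g y $ a $ b * W y $ i * cov g Z i a y * v $ b)"
    by (rule sum.cong[OF refl]) (rule sum.swap)
  finally show ?thesis
    using metric_sym[OF y] by (simp add: sum_distrib_left mult_ac)
qed

end

section \<open>Contractions of 2-tensors\<close>

definition tinner :: "(real^'n::finite \<Rightarrow> real^'n^'n) \<Rightarrow> real^'n \<Rightarrow> ('n \<Rightarrow> 'n \<Rightarrow> real) \<Rightarrow> ('n \<Rightarrow> 'n \<Rightarrow> real) \<Rightarrow> real" where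
  "tinner g y S T = (\<Sum>i\<in>UNIV. \<Sum>j\<in>UNIV. \<Sum>a\<in>UNIV. \<Sum>b\<in>UNIV. ginv g y $ i $ a * ginv g y $ j $ b * S i j * T a b)"

definition gtrace :: "(real^'n::finite \<Rightarrow> real^'n^'n) \<Rightarrow> real^'n \<Rightarrow> ('n \<Rightarrow> 'n \<Rightarrow> real) \<Rightarrow> real" where
  "gtrace g y S = (\<Sum>i\<in>UNIV. \<Sum>j\<in>UNIV. ginv g y $ i $ j * S i j)"

lemma gtrace_add: "gtrace g y (\<lambda>i j. S i j + T i j) = gtrace g y S + gtrace g y T"
  by (simp add: gtrace_def distrib_left sum.distrib)

lemma gtrace_diff: "gtrace g y (\<lambda>i j. S i j - T i j) = gtrace g y S - gtrace g y T"
  by (simp add: gtrace_def right_diff_distrib sum_subtractf)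

lemma gtrace_scale: "gtrace g y (\<lambda>i j. c * S i j) = c * gtrace g y S"
  by (simp add: gtrace_def sum_distrib_left mult_ac)

lemma scal_eq_gtrace: "scal g y = gtrace g y (\<lambda>i j. ricci g i j y)"
  by (simp add: gtrace_def scal_def)

lemma lap_eq_gtrace: "lap g h y = gtrace g y (\<lambda>i j. hess g h i j y)"
  by (simp add: gtrace_def lap_def)

lemma tnorm2_eq_tinner: "tnorm2 g T y = tinner g y (\<lambda>i j. T i j y) (\<lambda>i j. T i j y)"
  by (simp add: tnorm2_def tinner_def)

lemma tinner_add_left: "tinner g y (\<lambda>i j. S1 i j + S2 i j) T = tinner g y S1 T + tinner g y S2 T"
  by (simp add: tinner_def distrib_left distrib_right sum.distrib)

lemma tinner_add_right: "tinner g y T (\<lambda>i j. S1 i j + S2 i j) = tinner g y T S1 + tinner g y T S2"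
  by (simp add: tinner_def distrib_left distrib_right sum.distrib)

lemma tinner_scale_left: "tinner g y (\<lambda>i j. c * S i j) T = c * tinner g y S T"
  by (simp add: tinner_def sum_distrib_left mult_ac)

lemma tinner_scale_right: "tinner g y T (\<lambda>i j. c * S i j) = c * tinner g y T S"
  by (simp add: tinner_def sum_distrib_left mult_ac)

lemma bilin_add: "bilin (\<lambda>i j. S i j + T i j) v w = bilin S v w + bilin T v w"
  by (simp add: bilin_def distrib_right sum.distrib)

lemma bilin_diff: "bilin (\<lambda>i j. S i j - T i j) v w = bilin S v w - bilin T v w"
  by (simp add: bilin_def left_diff_distrib sum_subtractf)

lemma bilin_scale: "bilin (\<lambda>i j. c * S i j) v w = c * bilin S v w"
  by (simp add: bilin_def sum_distrib_left mult_ac)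

lemma bilin_tensor_product: "bilin (\<lambda>i j. a $ i * b $ j) v w = (a \<bullet> v) * (b \<bullet> w)"
  by (simp add: bilin_def inner_vec_def sum_product mult_ac)

lemma bilin_ricci:
  fixes g :: "real^'n::finite \<Rightarrow> real^'n^'n"
  shows "bilin (\<lambda>i j. ricci g i j y) v w
    = bilin (\<lambda>i j. tricci g i j y) v w + scal g y / CARD('n) * ginner g y v w"
  unfolding tricci_def bilin_diff bilin_scale ginner_eq_bilin by simp

context riemannian_chart
begin

lemma tinner_commute: assumes y: "y \<in> U" shows "tinner g y S T = tinner g y T S"
proof -
  let ?T = "\<lambda>i j a b. ginv g y $ i $ a * ginv g y $ j $ b * S i j * T a b"
  have "tinner g y S T = (\<Sum>i\<in>UNIV. \<Sum>j\<in>UNIV. \<Sum>a\<in>UNIV. \<Sum>b\<in>UNIV. ?T i j a b)"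
    unfolding tinner_def ..
  also have "\<dots> = (\<Sum>j\<in>UNIV. \<Sum>a\<in>UNIV. \<Sum>b\<in>UNIV. \<Sum>i\<in>UNIV. ?T i j a b)"
    by (rule sum_rotate4)
  also have "\<dots> = (\<Sum>a\<in>UNIV. \<Sum>b\<in>UNIV. \<Sum>i\<in>UNIV. \<Sum>j\<in>UNIV. ?T i j a b)"
    by (rule sum_rotate4)
  also have "\<dots> = tinner g y T S"
    unfolding tinner_def using ginv_sym[OF y] by (simp add: mult_ac)
  finally show ?thesis .
qed

lemma tinner_metric: assumes y: "y \<in> U" shows "tinner g y S (\<lambda>i j. g y $ i $ j) = gtrace g y S"
proof -
  have "tinner g y S (\<lambda>i j. g y $ i $ j) = (\<Sum>i\<in>UNIV. \<Sum>j\<in>UNIV.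
      S i j * (\<Sum>a\<in>UNIV. ginv g y $ i $ a * (\<Sum>b\<in>UNIV. g y $ a $ b * ginv g y $ b $ j)))"
    unfolding tinner_def using ginv_sym[OF y] by (simp add: sum_distrib_left mult_ac)
  also have "\<dots> = gtrace g y S"
    unfolding gtrace_def using contract_inverse_left[of "\<lambda>a b. ginv g y $ a $ b" "\<lambda>a b. g y $ a $ b", OF ginv_metric_sum[OF y]]
    by (simp add: metric_ginv_sum[OF y] mult_ac)
  finally show ?thesis .
qed

lemma ginv_flat: "y \<in> U \<Longrightarrow> (\<Sum>a\<in>UNIV. ginv g y $ i $ a * flat g X y $ a) = X y $ i"
  using sharp_flat[of y X] by (simp add: sharp_def vec_eq_iff)

lemma tinner_flat_flat:
  assumes y: "y \<in> U"
  shows "tinner g y S (\<lambda>i j. flat g X y $ i * flat g X y $ j) = bilin S (X y) (X y)"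
proof -
  have "bilin S (X y) (X y) = (\<Sum>i\<in>UNIV. \<Sum>j\<in>UNIV. S i j * (\<Sum>a\<in>UNIV. ginv g y $ i $ a * flat g X y $ a)
     * (\<Sum>b\<in>UNIV. ginv g y $ j $ b * flat g X y $ b))"
    by (simp add: bilin_def ginv_flat[OF y])
  also have "\<dots> = tinner g y S (\<lambda>i j. flat g X y $ i * flat g X y $ j)"
    unfolding tinner_def by (simp add: sum_distrib_left sum_distrib_right mult_ac)
  finally show ?thesis by simp
qed

lemma gtrace_metric: assumes y: "y \<in> U" shows "gtrace g y (\<lambda>i j. g y $ i $ j) = CARD('n)"
proof -
  have "gtrace g y (\<lambda>i j. g y $ i $ j) = (\<Sum>i\<in>UNIV. \<Sum>j\<in>UNIV. ginv g y $ i $ j * g y $ j $ i)"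
    unfolding gtrace_def using metric_sym[OF y] by simp
  then show ?thesis by (simp add: ginv_metric_sum[OF y])
qed

lemma gtrace_flat_flat: "y \<in> U \<Longrightarrow> gtrace g y (\<lambda>i j. flat g X y $ i * flat g X y $ j) = ginner g y (X y) (X y)"
  using tinner_metric[of y "\<lambda>i j. flat g X y $ i * flat g X y $ j"] tinner_commute[of y]
    tinner_flat_flat[of y] by (simp add: ginner_eq_bilin)

lemma gtrace_tricci: assumes y: "y \<in> U" shows "gtrace g y (\<lambda>i j. tricci g i j y) = 0"
proof -
  have "gtrace g y (\<lambda>i j. tricci g i j y)
      = gtrace g y (\<lambda>i j. ricci g i j y) - scal g y / CARD('n) * gtrace g y (\<lambda>i j. g y $ i $ j)"
    unfolding tricci_def gtrace_diff gtrace_scale ..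
  then show ?thesis by (simp add: gtrace_metric[OF y] scal_eq_gtrace)
qed

lemma flat_inner: "y \<in> U \<Longrightarrow> flat g X y \<bullet> v = ginner g y (X y) v"
  by (simp add: ginner_eq_flat inner_vec_def)

lemma bilin_decomp:
  assumes y: "y \<in> U"
  shows "bilin (\<lambda>i j. A i j - t * g y $ i $ j + 2 * (flat g Z y $ i * flat g Z y $ j)) v w
    = bilin A v w - t * ginner g y v w + 2 * (ginner g y (Z y) v * ginner g y (Z y) w)"
  unfolding bilin_add bilin_diff bilin_scale bilin_tensor_product flat_inner[OF y] ginner_eq_bilin ..

lemma tinner_decomp:
  fixes t :: real and A :: "'n \<Rightarrow> 'n \<Rightarrow> real" and Z :: "real^'n \<Rightarrow> real^'n"
  assumes y: "y \<in> U" and A: "gtrace g y A = 0"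
  defines "T \<equiv> \<lambda>i j. A i j - t * g y $ i $ j + 2 * (flat g Z y $ i * flat g Z y $ j)"
  shows "tinner g y T T = tinner g y A A + 4 * bilin A (Z y) (Z y) + CARD('n) * t\<^sup>2
    - 4 * t * ginner g y (Z y) (Z y) + 4 * (ginner g y (Z y) (Z y))\<^sup>2"
proof -
  let ?g = "\<lambda>i j. g y $ i $ j" and ?b = "\<lambda>i j. flat g Z y $ i * flat g Z y $ j"
  have "tinner g y ?b ?b = (ginner g y (Z y) (Z y))\<^sup>2"
    by (simp add: tinner_flat_flat[OF y] bilin_tensor_product flat_inner[OF y] power2_eq_square)
  moreover have "tinner g y ?g ?g = CARD('n)" "tinner g y A ?g = 0" "tinner g y ?b ?g = ginner g y (Z y) (Z y)"
    using tinner_metric[OF y] gtrace_metric[OF y] A gtrace_flat_flat[OF y] by simp_all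
  moreover have "tinner g y ?g A = 0" "tinner g y ?g ?b = ginner g y (Z y) (Z y)" "tinner g y ?b A = bilin A (Z y) (Z y)"
    using calculation tinner_commute[OF y] tinner_flat_flat[OF y] by metis+
  ultimately show ?thesis
    unfolding T_def diff_conv_add_uminus minus_mult_left tinner_add_left tinner_add_right
      tinner_scale_left tinner_scale_right tinner_flat_flat[OF y]
    by (simp add: algebra_simps power2_eq_square)
qed

end

section \<open>Electrostatic systems\<close>

locale electrostatic_chart =
  fixes U :: "(real^'n::finite) set" and g :: "real^'n \<Rightarrow> real^'n^'n"
    and f :: "real^'n \<Rightarrow> real" and E :: "real^'n \<Rightarrow> real^'n" and \<Lambda> :: real
  assumes electrostatic: "electrostatic_system U g f E \<Lambda>"
    and dim_ge_2: "CARD('n) \<ge> 2"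
begin

sublocale riemannian_chart U g
  using electrostatic by unfold_locales (simp_all add: electrostatic_system_def)

lemma f_smooth: "smooth_on U f"
  using electrostatic by (simp add: electrostatic_system_def)

lemma E_smooth: "smooth_field_on U E"
  using electrostatic by (simp add: electrostatic_system_def smooth_field_on_def)

lemma f_pos: "y \<in> U \<Longrightarrow> f y > 0"
  using electrostatic by (simp add: electrostatic_system_def)

lemma hess_f: "y \<in> U \<Longrightarrow> hess g f i j y = f y * (ricci g i j y - 2 / (real CARD('n) - 1) * \<Lambda> * g y $ i $ j
    + 2 * flat g E y $ i * flat g E y $ j - 2 / (real CARD('n) - 1) * ginner g y (E y) (E y) * g y $ i $ j)"
  using electrostatic by (simp add: electrostatic_system_def)

lemma lap_f: "y \<in> U \<Longrightarrow>
    lap g f y = 2 / (real CARD('n) - 1) * ((real CARD('n) - 2) * ginner g y (E y) (E y) - \<Lambda>) * f y"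
  using electrostatic by (simp add: electrostatic_system_def)

lemma divv_E: "y \<in> U \<Longrightarrow> divv g E y = 0"
  using electrostatic by (simp add: electrostatic_system_def)

lemma closed_f_flat_E: "closed_form_on U (\<lambda>x. f x *\<^sub>R flat g E x)"
  using electrostatic by (simp add: electrostatic_system_def)

lemma hess_f_grouped:
  "y \<in> U \<Longrightarrow> hess g f i j y = f y * (ricci g i j y
    - 2 / (real CARD('n) - 1) * (\<Lambda> + ginner g y (E y) (E y)) * g y $ i $ j + 2 * (flat g E y $ i * flat g E y $ j))"
  by (simp add: hess_f algebra_simps add_divide_distrib)

lemma scal_eq: assumes y: "y \<in> U" shows "scal g y = 2 * \<Lambda> + 2 * ginner g y (E y) (E y)"
proof -
  define n where "n = real CARD('n)"
  define a where "a = ginner g y (E y) (E y)"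
  define R where "R = scal g y"
  have n: "n - 1 \<noteq> 0" using dim_ge_2 by (simp add: n_def)
  have "lap g f y = f y * (R - 2 / (n - 1) * (\<Lambda> + a) * n + 2 * a)"
    unfolding lap_eq_gtrace hess_f_grouped[OF y] gtrace_scale gtrace_add gtrace_diff
    by (simp add: gtrace_metric[OF y] gtrace_flat_flat[OF y] scal_eq_gtrace n_def a_def R_def)
  moreover have "lap g f y = f y * (2 / (n - 1) * ((n - 2) * a - \<Lambda>))"
    using lap_f[OF y] by (simp add: n_def a_def mult_ac)
  ultimately have "R - 2 / (n - 1) * (\<Lambda> + a) * n + 2 * a = 2 / (n - 1) * ((n - 2) * a - \<Lambda>)"
    using f_pos[OF y] by (metis less_irrefl mult_left_cancel)
  then have "(n - 1) * R - 2 * (\<Lambda> + a) * n + 2 * a * (n - 1) = 2 * ((n - 2) * a - \<Lambda>)"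
    using n by (simp add: field_simps)
  then have "(n - 1) * R = (n - 1) * (2 * \<Lambda> + 2 * a)"
    by (simp add: algebra_simps)
  then show ?thesis using n by (simp add: R_def a_def)
qed

lemma hess_f_tricci:
  assumes y: "y \<in> U"
  shows "hess g f i j y = f y * (tricci g i j y - scal g y / (real CARD('n) * (real CARD('n) - 1)) * g y $ i $ j
    + 2 * (flat g E y $ i * flat g E y $ j))"
proof -
  define n where "n = real CARD('n)"
  have n: "n \<ge> 2" using dim_ge_2 by (simp add: n_def)
  have "2 / (n - 1) * (\<Lambda> + ginner g y (E y) (E y)) = scal g y / n + scal g y / (n * (n - 1))"
    unfolding scal_eq[OF y] using n by (simp add: field_simps)
  then show ?thesis
    unfolding hess_f_grouped[OF y] tricci_def n_def by (simp add: algebra_simps)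
qed

lemma divv_grad_f:
  assumes y: "y \<in> U"
  shows "divv g (grad g f) y = (2 * ginner g y (E y) (E y) - scal g y / (real CARD('n) - 1)) * f y"
proof -
  define n where "n = real CARD('n)"
  have "n \<noteq> 0" "n - 1 \<noteq> 0" using dim_ge_2 by (auto simp: n_def)
  then show ?thesis
    unfolding divv_grad[OF y f_smooth] lap_f[OF y] scal_eq[OF y] n_def[symmetric] by (simp add: field_simps)
qed

lemma tnorm2_hess_f:
  assumes y: "y \<in> U"
  defines "s \<equiv> scal g y / (real CARD('n) * (real CARD('n) - 1))" and "a \<equiv> ginner g y (E y) (E y)"
  shows "tnorm2 g (hess g f) y = (f y)\<^sup>2 * (tnorm2 g (tricci g) y
    + 4 * bilin (\<lambda>i j. tricci g i j y) (E y) (E y) + real CARD('n) * s\<^sup>2 - 4 * s * a + 4 * a\<^sup>2)"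
  using tinner_decomp[OF y gtrace_tricci[OF y], of s E]
  unfolding tnorm2_eq_tinner hess_f_tricci[OF y] tinner_scale_left tinner_scale_right s_def a_def
  by (simp add: power2_eq_square)

lemma bilin_hess_f:
  assumes y: "y \<in> U"
  shows "bilin (\<lambda>i j. hess g f i j y) v w = f y * (bilin (\<lambda>i j. tricci g i j y) v w
    - scal g y / (real CARD('n) * (real CARD('n) - 1)) * ginner g y v w
    + 2 * (ginner g y (E y) v * ginner g y (E y) w))"
  unfolding hess_f_tricci[OF y] bilin_scale bilin_decomp[OF y] ..

lemma smooth_on_norm_E: "smooth_on U (\<lambda>z. ginner g z (E z) (E z))"
  by (rule smooth_on_ginner[OF E_smooth E_smooth])

lemma dif_norm_E: "y \<in> U \<Longrightarrow> dif (\<lambda>z. ginner g z (E z) (E z)) y \<bullet> W y = 2 * ginner g y (cov_along g W E y) (E y)"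
  using dif_ginner[OF _ E_smooth E_smooth] ginner_commute by simp

lemma dif_scal: assumes y: "y \<in> U" shows "dif (scal g) y \<bullet> W y = 4 * ginner g y (cov_along g W E y) (E y)"
proof -
  have "dif (scal g) y = dif (\<lambda>z. 2 * ginner g z (E z) (E z) + 2 * \<Lambda>) y"
    by (rule dif_cong[OF open_U y]) (simp add: scal_eq)
  also have "\<dots> = 2 *\<^sub>R dif (\<lambda>z. ginner g z (E z) (E z)) y"
    by (rule dif_affine[OF smooth_on_imp_differentiable[OF smooth_on_norm_E y]])
  finally show ?thesis by (simp add: dif_norm_E[OF y])
qed

lemma closed_f_flat_E_cov:
  assumes y: "y \<in> U"
  shows "f y * ((\<Sum>b\<in>UNIV. g y $ j $ b * cov g E i b y) - (\<Sum>b\<in>UNIV. g y $ i $ b * cov g E j b y))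
     = pd j f y * flat g E y $ i - pd i f y * flat g E y $ j"
proof -
  define G where "G = (\<Sum>e\<in>UNIV. christ g e j i y * flat g E y $ e)"
  have "f differentiable at y" "(\<lambda>z. flat g E z $ a) differentiable at y" for a
    using f_smooth smooth_field_flat[OF E_smooth] y smooth_on_imp_differentiable
    unfolding smooth_field_on_def by blast+
  moreover have "pd i (\<lambda>z. f z * flat g E z $ j) y = pd j (\<lambda>z. f z * flat g E z $ i) y"
    using closed_f_flat_E y unfolding closed_form_on_def by simp
  ultimately have "f y * pd i (\<lambda>z. flat g E z $ j) y + pd i f y * flat g E y $ j
      = f y * pd j (\<lambda>z. flat g E z $ i) y + pd j f y * flat g E y $ i"
    by (simp add: pd_mult)
  moreover have "pd i (\<lambda>z. flat g E z $ j) y = (\<Sum>b\<in>UNIV. g y $ j $ b * cov g E i b y) + G"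
    unfolding pd_flat[OF y E_smooth] G_def by (simp add: christ_sym[OF y, of _ i j])
  moreover have "pd j (\<lambda>z. flat g E z $ i) y = (\<Sum>b\<in>UNIV. g y $ i $ b * cov g E j b y) + G"
    unfolding pd_flat[OF y E_smooth] G_def ..
  ultimately show ?thesis by (simp only: distrib_left right_diff_distrib)
qed

lemma closed_f_flat_E_contracted:
  assumes y: "y \<in> U"
  shows "f y * (ginner g y (cov_along g (grad g f) E y) (E y) - ginner g y (grad g f y) (cov_along g E E y))
    = (ginner g y (E y) (grad g f y))\<^sup>2 - ginner g y (grad g f y) (grad g f y) * ginner g y (E y) (E y)"
proof -
  let ?X = "grad g f y"
  have "f y * (ginner g y (cov_along g (grad g f) E y) (E y) - ginner g y ?X (cov_along g E E y))
    = (\<Sum>i\<in>UNIV. \<Sum>j\<in>UNIV. ?X $ i * E y $ j * (f y * ((\<Sum>b\<in>UNIV. g y $ j $ b * cov g E i b y)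
        - (\<Sum>b\<in>UNIV. g y $ i $ b * cov g E j b y))))"
    unfolding ginner_commute[OF y, of ?X] ginner_cov_along_eq_sum[OF y]
    by (simp add: right_diff_distrib sum_subtractf sum_distrib_left mult_ac)
      (subst (2) sum.swap, simp add: mult_ac)
  also have "\<dots> = (flat g E y \<bullet> ?X) * (dif f y \<bullet> E y) - (dif f y \<bullet> ?X) * (flat g E y \<bullet> E y)"
    unfolding closed_f_flat_E_cov[OF y]
    by (simp add: inner_vec_def dif_def sum_product right_diff_distrib sum_subtractf mult_ac)
      (subst sum.swap, simp add: mult_ac)
  finally show ?thesis
    by (simp add: flat_inner[OF y] ginner_grad[OF y, symmetric] ginner_commute[OF y, of ?X "E y"] power2_eq_square)
qed

lemma scal_smooth: "smooth_on U (scal g)"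
proof (rule smooth_on_cong[OF open_U])
  show "smooth_on U (\<lambda>z. 2 * \<Lambda> + 2 * ginner g z (E z) (E z))"
    by (intro smooth_on_add[OF open_U] smooth_on_mult[OF open_U] smooth_on_const[OF open_U] smooth_on_norm_E)
  show "\<And>z. z \<in> U \<Longrightarrow> 2 * \<Lambda> + 2 * ginner g z (E z) (E z) = scal g z"
    by (simp add: scal_eq)
qed

lemma dif_ginner_grad_E:
  assumes y: "y \<in> U"
  shows "dif (\<lambda>z. ginner g z (grad g f z) (E z)) y \<bullet> E y
    = bilin (\<lambda>i j. hess g f i j y) (E y) (E y) + ginner g y (grad g f y) (cov_along g E E y)"
  using dif_ginner[OF y smooth_field_grad[OF f_smooth] E_smooth, of E]
  by (simp add: ginner_cov_along_grad[OF y f_smooth])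

lemma dif_f_cov_along_grad:
  assumes y: "y \<in> U"
  shows "dif f y \<bullet> cov_along g (grad g f) (grad g f) y = bilin (\<lambda>i j. hess g f i j y) (grad g f y) (grad g f y)"
proof -
  have "dif f y \<bullet> cov_along g (grad g f) (grad g f) y = ginner g y (grad g f y) (cov_along g (grad g f) (grad g f) y)"
    by (rule ginner_grad[OF y, symmetric])
  also have "\<dots> = ginner g y (cov_along g (grad g f) (grad g f) y) (grad g f y)"
    by (rule ginner_commute[OF y])
  finally show ?thesis by (simp add: ginner_cov_along_grad[OF y f_smooth])
qed

lemma dif_divv_grad_f:
  assumes y: "y \<in> U"
  shows "dif (divv g (grad g f)) y \<bullet> grad g f y
    = (2 * ginner g y (E y) (E y) - scal g y / (real CARD('n) - 1)) * ginner g y (grad g f y) (grad g f y)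
      + f y * (4 * (real CARD('n) - 2) / (real CARD('n) - 1)) * ginner g y (cov_along g (grad g f) E y) (E y)"
proof -
  define n where "n = real CARD('n)"
  define \<kappa> where "\<kappa> z = 2 * ginner g z (E z) (E z) - 1 / (n - 1) * scal g z" for z
  have n: "n - 1 \<noteq> 0" using dim_ge_2 by (simp add: n_def)
  have d: "(\<lambda>z. ginner g z (E z) (E z)) differentiable at y" "scal g differentiable at y" "f differentiable at y"
    using smooth_on_norm_E scal_smooth f_smooth y smooth_on_imp_differentiable by blast+
  then have "\<kappa> differentiable at y"
    unfolding \<kappa>_def by (intro differentiable_diff differentiable_mult differentiable_const)
  have "dif (divv g (grad g f)) y = dif (\<lambda>z. \<kappa> z * f z) y"
    by (intro dif_cong[OF open_U y]) (simp add: divv_grad_f \<kappa>_def n_def)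
  also have "\<dots> = \<kappa> y *\<^sub>R dif f y + f y *\<^sub>R dif \<kappa> y"
    by (rule dif_mult[OF \<open>\<kappa> differentiable at y\<close> d(3)])
  finally have "dif (divv g (grad g f)) y \<bullet> grad g f y
      = \<kappa> y * (dif f y \<bullet> grad g f y) + f y * (dif \<kappa> y \<bullet> grad g f y)"
    by (simp add: inner_add_left)
  moreover have "dif \<kappa> y \<bullet> grad g f y = 4 * (n - 2) / (n - 1) * ginner g y (cov_along g (grad g f) E y) (E y)"
    unfolding \<kappa>_def dif_scale_diff[OF d(1,2)] using n
    by (simp add: inner_diff_left dif_norm_E[OF y] dif_scal[OF y] field_simps)
  ultimately show ?thesis
    by (simp add: \<kappa>_def n_def ginner_grad[OF y, symmetric] divide_inverse)
qed

definition V :: "real^'n \<Rightarrow> real^'n" where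
  "V z = (2 / f z) *\<^sub>R cov_along g (grad g f) (grad g f) z - (4 * ginner g z (grad g f z) (E z)) *\<^sub>R E z
      + (2 / (real CARD('n) * (real CARD('n) - 1)) * scal g z) *\<^sub>R grad g f z"

lemma sharp_field_eq_V:
  assumes y: "y \<in> U"
  shows "sharp g (\<lambda>y. (1 / f y) *\<^sub>R
            (dif (\<lambda>z. ginner g z (grad g f z) (grad g f z)) y
             - (4 * f y * ginner g y (grad g f y) (E y)) *\<^sub>R flat g E y
             + (2 * scal g y * f y / (real CARD('n) * (real CARD('n) - 1))) *\<^sub>R dif f y)) y = V y"
  using f_pos[OF y]
  by (simp add: V_def sharp_scaleR sharp_diff_add sharp_dif_norm_grad[OF y f_smooth] sharp_flat[OF y]
      grad_def[of g f, symmetric] scaleR_add_right scaleR_diff_right)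

lemma divv_V_expand:
  assumes y: "y \<in> U"
  defines "c \<equiv> 2 / (real CARD('n) * (real CARD('n) - 1))"
  shows "divv g V y
    = (2 / f y * divv g (cov_along g (grad g f) (grad g f)) y
        + - 2 / (f y)\<^sup>2 * bilin (\<lambda>i j. hess g f i j y) (grad g f y) (grad g f y))
      - (4 * ginner g y (grad g f y) (E y) * 0
        + 4 * (bilin (\<lambda>i j. hess g f i j y) (E y) (E y) + ginner g y (grad g f y) (cov_along g E E y)))
      + (c * scal g y * divv g (grad g f) y + c * (4 * ginner g y (cov_along g (grad g f) E y) (E y)))"
proof -
  let ?X = "grad g f" and ?N = "cov_along g (grad g f) (grad g f)" and ?\<phi> = "\<lambda>z. ginner g z (grad g f z) (E z)"
  have X: "smooth_field_on U ?X" by (rule smooth_field_grad[OF f_smooth])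
  have field: "(\<lambda>z. Z z $ i) differentiable at y" if "smooth_field_on U Z" for Z i
    using that y smooth_on_imp_differentiable unfolding smooth_field_on_def by blast
  have d: "f differentiable at y" "?\<phi> differentiable at y" "scal g differentiable at y"
    using f_smooth smooth_on_ginner[OF X E_smooth] scal_smooth y smooth_on_imp_differentiable by blast+
  moreover have "(\<lambda>z. 2 / f z) differentiable at y"
    using d(1) f_pos[OF y] by (intro differentiable_divide differentiable_const) auto
  ultimately have "divv g V y
    = (2 / f y * divv g ?N y + dif (\<lambda>z. 2 / f z) y \<bullet> ?N y) - (4 * ?\<phi> y * divv g E y + dif (\<lambda>z. 4 * ?\<phi> z) y \<bullet> E y)
      + (c * scal g y * divv g ?X y + dif (\<lambda>z. c * scal g z) y \<bullet> ?X y)"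
    unfolding V_def[abs_def] c_def
    by (intro divv_scaleR_diff_add field smooth_field_cov_along X E_smooth differentiable_mult differentiable_const)
  moreover have "dif (\<lambda>z. 2 / f z) y \<bullet> ?N y = - 2 / (f y)\<^sup>2 * bilin (\<lambda>i j. hess g f i j y) (?X y) (?X y)"
    unfolding dif_inverse[OF d(1) less_imp_neq[OF f_pos[OF y], symmetric]]
      inner_scaleR_left dif_f_cov_along_grad[OF y] ..
  moreover have "dif (\<lambda>z. 4 * ?\<phi> z) y \<bullet> E y
      = 4 * (bilin (\<lambda>i j. hess g f i j y) (E y) (E y) + ginner g y (?X y) (cov_along g E E y))"
    unfolding dif_cmult[OF d(2)] inner_scaleR_left dif_ginner_grad_E[OF y] ..
  moreover have "dif (\<lambda>z. c * scal g z) y \<bullet> ?X y = c * (4 * ginner g y (cov_along g ?X E y) (E y))"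
    unfolding dif_cmult[OF d(3)] inner_scaleR_left dif_scal[OF y] ..
  ultimately show ?thesis by (simp only: divv_E[OF y])
qed

end

text \<open>The variables stand for the terms of the divergence computation at a point: \<open>F = f\<close>,
  \<open>a = |E|\<^sup>2\<close>, \<open>m = |\<nabla>f|\<^sup>2\<close>, \<open>\<phi> = \<langle>E, \<nabla>f\<rangle>\<close>, \<open>s = R/(n(n-1))\<close>,
  \<open>P = |Ric\<^sub>0|\<^sup>2\<close>, \<open>A = Ric\<^sub>0(E, E)\<close>, \<open>Q = Ric\<^sub>0(\<nabla>f, \<nabla>f)\<close>,
  \<open>dN = div(\<nabla>\<^bsub>\<nabla>f\<^esub> \<nabla>f)\<close>, \<open>H = |\<nabla>\<^sup>2f|\<^sup>2\<close>, \<open>dD = \<langle>\<nabla>\<Delta>f, \<nabla>f\<rangle>\<close>,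
  \<open>Ric = Ric(\<nabla>f, \<nabla>f)\<close>, \<open>HXX = \<nabla>\<^sup>2f(\<nabla>f, \<nabla>f)\<close>, \<open>HEE = \<nabla>\<^sup>2f(E, E)\<close>, \<open>dX = \<Delta>f\<close>,
  \<open>S1 = \<langle>\<nabla>\<^bsub>\<nabla>f\<^esub> E, E\<rangle>\<close> and \<open>S2 = \<langle>\<nabla>f, \<nabla>\<^sub>E E\<rangle>\<close>; \<open>closed\<close> is \<open>d(f E\<flat>) = 0\<close>
  contracted with \<open>\<nabla>f\<close> and \<open>E\<close>.\<close>

lemma divergence_identity_algebra:
  fixes F n R a m \<phi> \<Phi> P A Q S1 S2 s dN H dD Ric HXX HEE dX :: real
  assumes F: "F \<noteq> 0" and n: "n \<ge> 2" and closed: "F * (S1 - S2) = \<phi>\<^sup>2 - m * a"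
    and divN: "dN = H + dD + Ric"
    and H: "H = F\<^sup>2 * (P + 4 * A + n * s\<^sup>2 - 4 * s * a + 4 * a\<^sup>2)"
    and dD: "dD = (2 * a - R / (n - 1)) * m + F * (4 * (n - 2) / (n - 1)) * S1"
    and Ric: "Ric = Q + R / n * m"
    and HXX: "HXX = F * (Q - s * m + 2 * (\<phi> * \<phi>))"
    and HEE: "HEE = F * (A - s * a + 2 * (a * a))"
    and dX: "dX = (2 * a - R / (n - 1)) * F"
    and s: "s = R / (n * (n - 1))"
  shows "(2 / F * dN + - 2 / F\<^sup>2 * HXX) - (4 * \<Phi> * 0 + 4 * (HEE + S2))
      + (2 / (n * (n - 1)) * R * dX + 2 / (n * (n - 1)) * (4 * S1))
     = 2 * F * P + 4 * F * A + (n - 2) / n * (4 * S1)"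
proof -
  have S1: "S1 = S2 + (\<phi>\<^sup>2 - m * a) / F" using closed F by (simp add: field_simps)
  define p where "p = n - 1"
  have p: "p \<noteq> 0" "n \<noteq> 0" "n = p + 1" using n by (auto simp: p_def)
  show ?thesis unfolding divN H dD Ric HXX HEE dX s S1 p_def[symmetric] using F p(1,2)
    by (simp add: field_simps power2_eq_square) (simp add: p(3) algebra_simps)
qed

lemma (in electrostatic_chart) divv_V:
  assumes y: "y \<in> U"
  shows "divv g V y = 2 * f y * tnorm2 g (tricci g) y + 4 * f y * bilin (\<lambda>i j. tricci g i j y) (E y) (E y)
      + (real CARD('n) - 2) / real CARD('n) * ginner g y (grad g (scal g) y) (grad g f y)"
proof -
  have "f y \<noteq> 0" "real CARD('n) \<ge> 2" using f_pos[OF y] dim_ge_2 by auto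
  then have "divv g V y = 2 * f y * tnorm2 g (tricci g) y + 4 * f y * bilin (\<lambda>i j. tricci g i j y) (E y) (E y)
      + (real CARD('n) - 2) / real CARD('n) * (4 * ginner g y (cov_along g (grad g f) E y) (E y))"
    unfolding divv_V_expand[OF y]
    by (rule divergence_identity_algebra[OF _ _ closed_f_flat_E_contracted[OF y]
          divv_cov_along_grad[OF y f_smooth] tnorm2_hess_f[OF y] dif_divv_grad_f[OF y] bilin_ricci
          bilin_hess_f[OF y] bilin_hess_f[OF y] divv_grad_f[OF y] refl])
  moreover have "4 * ginner g y (cov_along g (grad g f) E y) (E y) = ginner g y (grad g (scal g) y) (grad g f y)"
    by (simp add: ginner_grad[OF y] dif_scal[OF y])
  ultimately show ?thesis by (simp only:)
qed

theorem lemma2p4: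
  fixes U :: "(real^'n::finite) set"
    and g :: "real^'n \<Rightarrow> real^'n^'n" and f :: "real^'n \<Rightarrow> real"
    and E :: "real^'n \<Rightarrow> real^'n" and \<Lambda> :: real
  assumes "CARD('n) \<ge> 3"
    and "electrostatic_system U g f E \<Lambda>"
    and "x \<in> U" and "f x > 0"
  shows "divv g (sharp g (\<lambda>y. (1 / f y) *\<^sub>R
            (dif (\<lambda>z. ginner g z (grad g f z) (grad g f z)) y
             - (4 * f y * ginner g y (grad g f y) (E y)) *\<^sub>R flat g E y
             + (2 * scal g y * f y / (real CARD('n) * (real CARD('n) - 1))) *\<^sub>R dif f y))) x
       = 2 * f x * tnorm2 g (tricci g) x
         + 4 * f x * (\<Sum>i\<in>UNIV. \<Sum>j\<in>UNIV. tricci g i j x * E x $ i * E x $ j)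
         + (real CARD('n) - 2) / real CARD('n) * ginner g x (grad g (scal g) x) (grad g f x)"
proof -
  \<comment> \<open>Only \<open>CARD('n) \<ge> 2\<close> is needed, and \<open>f x > 0\<close> already follows from \<open>x \<in> U\<close>.\<close>
  interpret electrostatic_chart U g f E \<Lambda>
    using assms(1,2) by unfold_locales auto
  show ?thesis
    using divv_cong[OF open_U assms(3) sharp_field_eq_V] divv_V[OF assms(3)] by (simp add: bilin_def)
qed

end
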